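(* Let $A\in(a,b)$, $x_A,x_b\in\mathbb{R}$, $U_A=\{x\in C^1[a,b]: x(A)=x_A,\ x(b)=x_b\}$, and $J(x)=\int_A^b L(t,x(t),{}^CD_{a+}^{\alpha,\rho}x(t))\,dt$. If $x$ is a local minimizer of $J$ on $U_A$, then, writing $\Lambda(t)=\partial_3L(t,x(t),{}^CD_{a+}^{\alpha,\rho}x(t))$, $$D_{A-}^{\alpha,\rho}\Lambda(t)-D_{b-}^{\alpha,\rho}\Lambda(t)=0\ \text{ on } [a,A],\qquad \partial_2L(t,x(t),{}^CD_{a+}^{\alpha,\rho}x(t))-D_{b-}^{\alpha,\rho}\Lambda(t)=0\ \text{ on } [A,b],$$ and $$I_{A-}^{1-\alpha,\rho}\Lambda(t)-I_{b-}^{1-\alpha,\rho}\Lambda(t)=0\ \text{ at } t=a.$$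
   Context: Fix $0<a<b<\infty$, $\alpha\in(0,1)$, $\rho>0$. For $x\in C^1[a,b]$, ${}^CD_{a+}^{\alpha,\rho} x(t)=\frac{\rho^\alpha}{\Gamma(1-\alpha)}\, t^{1-\rho}\frac{d}{dt}\int_a^t \frac{\tau^{\rho-1}}{(t^\rho-\tau^\rho)^\alpha}[x(\tau)-x(a)]\,d\tau=\frac{\rho^\alpha}{\Gamma(1-\alpha)}\int_a^t (t^\rho-\tau^\rho)^{-\alpha}x'(\tau)\,d\tau$. For $c\in\{A,b\}$ and a function $f$, $I_{c-}^{1-\alpha,\rho} f(t)=\frac{\rho^{\alpha}}{\Gamma(1-\alpha)}\int_t^c (\tau^\rho-t^\rho)^{-\alpha}f(\tau)\,d\tau$ and $D_{c-}^{\alpha,\rho} f(t)=\frac{\rho^\alpha}{\Gamma(1-\alpha)}\frac{d}{dt}\int_t^c (\tau^\rho-t^\rho)^{-\alpha}f(\tau)\,d\tau$. $\partial_i$ denotes the partial derivative with respect to the $i$-th argument. $L:[a,b]\times\mathbb{R}^2\to\mathbb{R}$ is continuously differentiable with respect to its second and third arguments, and for every $x\in C^1[a,b]$ the map $t\mapsto D_{b-}^{\alpha,\rho}(\partial_3L(t,x(t),{}^CD_{a+}^{\alpha,\rho}x(t)))$ is continuous. $C^1[a,b]$ carries the norm $\|x\|=\max|x|+\max|{}^CD_{a+}^{\alpha,\rho}x|$, and local minimizers are taken with respect to this norm. *)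

theory Defs
  imports "HOL-Analysis.Analysis"
begin

definition kat_coef :: "real \<Rightarrow> real \<Rightarrow> real" where
  "kat_coef \<rho> \<alpha> = \<rho> powr \<alpha> / Gamma (1 - \<alpha>)"

definition C1_on :: "real \<Rightarrow> real \<Rightarrow> (real \<Rightarrow> real) \<Rightarrow> bool" where
  "C1_on a b x \<longleftrightarrow> (\<exists>x'. continuous_on {a..b} x' \<and>
      (\<forall>t\<in>{a..b}. (x has_vector_derivative x' t) (at t within {a..b})))"

definition caputo_kat :: "real \<Rightarrow> real \<Rightarrow> real \<Rightarrow> real \<Rightarrow> (real \<Rightarrow> real) \<Rightarrow> real \<Rightarrow> real" where
  "caputo_kat a b \<alpha> \<rho> x t = kat_coef \<rho> \<alpha> *
     integral {a..t} (\<lambda>\<tau>. (t powr \<rho> - \<tau> powr \<rho>) powr (-\<alpha>) * vector_derivative x (at \<tau> within {a..b}))"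

text \<open>Right Katugampola fractional integral I_{c-}^{1-alpha,rho}.\<close>
definition kat_int_right :: "real \<Rightarrow> real \<Rightarrow> real \<Rightarrow> (real \<Rightarrow> real) \<Rightarrow> real \<Rightarrow> real" where
  "kat_int_right \<alpha> \<rho> c f t = kat_coef \<rho> \<alpha> *
     integral {t..c} (\<lambda>\<tau>. (\<tau> powr \<rho> - t powr \<rho>) powr (-\<alpha>) * f \<tau>)"

definition kat_der_right :: "real \<Rightarrow> real \<Rightarrow> real \<Rightarrow> real \<Rightarrow> (real \<Rightarrow> real) \<Rightarrow> real \<Rightarrow> real" where
  "kat_der_right a \<alpha> \<rho> c f t = vector_derivative (\<lambda>s. kat_int_right \<alpha> \<rho> c f s) (at t within {a..c})"

definition ck_norm :: "real \<Rightarrow> real \<Rightarrow> real \<Rightarrow> real \<Rightarrow> (real \<Rightarrow> real) \<Rightarrow> real" where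
  "ck_norm a b \<alpha> \<rho> z = (SUP t\<in>{a..b}. \<bar>z t\<bar>) + (SUP t\<in>{a..b}. \<bar>caputo_kat a b \<alpha> \<rho> z t\<bar>)"

definition part2 :: "(real \<Rightarrow> real \<Rightarrow> real \<Rightarrow> real) \<Rightarrow> real \<Rightarrow> real \<Rightarrow> real \<Rightarrow> real" where
  "part2 L t u v = deriv (\<lambda>w. L t w v) u"

definition part3 :: "(real \<Rightarrow> real \<Rightarrow> real \<Rightarrow> real) \<Rightarrow> real \<Rightarrow> real \<Rightarrow> real \<Rightarrow> real" where
  "part3 L t u v = deriv (\<lambda>w. L t u w) v"

end

theory Submission
  imports Defs
begin

text \<open>For a variation \<open>\<eta>\<close> of class \<open>C\<^sup>1\<close> vanishing at \<open>A\<close> and \<open>b\<close>, the curves \<open>x + e\<eta>\<close> are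
  admissible and close to \<open>x\<close>, so the first variation
  \<open>\<integral>\<^sub>A\<^sup>b \<eta> \<partial>\<^sub>2L + \<^sup>CD\<eta> \<Lambda>\<close> vanishes. By Fubini on the triangle \<open>a \<le> \<tau> \<le> t, A \<le> t \<le> b\<close> the
  second term equals \<open>\<integral>\<^sub>a\<^sup>b \<eta>' R\<close> with \<open>R = I\<^sub>b\<^sub>-\<Lambda> - \<chi>\<^bsub>[a,A]\<^esub> I\<^sub>A\<^sub>-\<Lambda>\<close>. Taking \<open>\<eta>' = (A - \<tau>) R\<close>
  on \<open>[a,A]\<close> and \<open>0\<close> beyond shows \<open>R = 0\<close> on \<open>[a,A]\<close>: this is the transversality condition at
  \<open>a\<close> and, differentiated, the first equation. Variations with \<open>\<eta>'\<close> constant on \<open>[a,A]\<close> then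
  show that \<open>I\<^sub>b\<^sub>-\<Lambda> - \<integral>\<^sub>A\<^sup>t \<partial>\<^sub>2L\<close> is orthogonal to every function of mean zero on \<open>[A,b]\<close>,
  hence constant by the du Bois-Reymond lemma; differentiating gives the second equation.\<close>

lemma powr_kernel_has_integral:
  fixes p t \<alpha> :: real
  assumes "p \<le> t" "0 < \<alpha>" "\<alpha> < 1"
  shows "((\<lambda>\<tau>. (t - \<tau>) powr (-\<alpha>)) has_integral (t - p) powr (1-\<alpha>) / (1-\<alpha>)) {p..t}"
proof -
  let ?F = "\<lambda>\<tau>. - ((t - \<tau>) powr (1-\<alpha>) / (1-\<alpha>))"
  have "((\<lambda>\<tau>. (t - \<tau>) powr (-\<alpha>)) has_integral (?F t - ?F p)) {p..t}"
  proof (rule fundamental_theorem_of_calculus_interior_strong[where S="{}"])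
    show "continuous_on {p..t} ?F"
      using assms by (intro continuous_intros continuous_on_powr') auto
    fix x assume x: "x \<in> {p<..<t} - {}"
    have "((\<lambda>\<tau>. (t - \<tau>) powr (1-\<alpha>)) has_real_derivative ((1-\<alpha>) * (t - x) powr (1-\<alpha>-1) * (-1))) (at x)"
      using x by (auto intro!: derivative_eq_intros)
    then have "(?F has_real_derivative (t - x) powr (-\<alpha>)) (at x)"
      using assms x by (auto intro!: derivative_eq_intros)
    then show "(?F has_vector_derivative (t - x) powr (-\<alpha>)) (at x)"
      by (simp add: has_real_derivative_iff_has_vector_derivative)
  qed (use assms in auto)
  then show ?thesis by simp
qed

lemma weakly_singular_absolutely_integrable:
  fixes k :: "real \<Rightarrow> real \<Rightarrow> real" and f :: "real \<Rightarrow> real"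
  assumes \<alpha>: "0 < \<alpha>" "\<alpha> < 1" and C: "0 \<le> C"
    and k_bound: "\<And>t \<tau>. p \<le> \<tau> \<Longrightarrow> \<tau> \<le> t \<Longrightarrow> t \<le> q \<Longrightarrow> \<bar>k t \<tau>\<bar> \<le> C * (t - \<tau>) powr (-\<alpha>)"
    and k_cont: "continuous_on {z. p \<le> snd z \<and> snd z < fst z \<and> fst z \<le> q} (\<lambda>z. k (fst z) (snd z))"
    and f_cont: "continuous_on {p..q} f"
    and t: "t \<in> {p..q}"
  shows "(\<lambda>\<tau>. k t \<tau> * f \<tau>) absolutely_integrable_on {p..t}"
proof -
  obtain M where M: "\<And>\<tau>. \<tau> \<in> {p..q} \<Longrightarrow> \<bar>f \<tau>\<bar> \<le> M"
    using continuous_on_compact_bound[OF compact_Icc f_cont] by (metis real_norm_def)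
  have "continuous_on {p..<t} (\<lambda>\<tau>. k t \<tau>)"
    using continuous_on_compose2[OF k_cont continuous_on_Pair[OF continuous_on_const continuous_on_id]] t
    by (auto simp: image_subset_iff)
  moreover have "continuous_on {p..<t} f"
    using f_cont t by (elim continuous_on_subset) auto
  ultimately have cont: "continuous_on {p..<t} (\<lambda>\<tau>. k t \<tau> * f \<tau>)"
    by (rule continuous_on_mult)
  have "(\<lambda>\<tau>. k t \<tau> * f \<tau>) measurable_on {p..<t}"
    using continuous_imp_measurable_on_sets_lebesgue[OF cont]
    by (simp add: measurable_on_iff_borel_measurable)
  then have "(\<lambda>\<tau>. k t \<tau> * f \<tau>) measurable_on {p..t}"
    by (rule measurable_on_spike_set) (use t in \<open>auto intro: negligible_subset[OF negligible_sing[of t]]\<close>)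
  then have meas: "(\<lambda>\<tau>. k t \<tau> * f \<tau>) \<in> borel_measurable (lebesgue_on {p..t})"
    by (simp add: measurable_on_iff_borel_measurable)
  have "((\<lambda>\<tau>. C * M * (t - \<tau>) powr (-\<alpha>)) has_integral C * M * ((t - p) powr (1-\<alpha>) / (1-\<alpha>))) {p..t}"
    using has_integral_mult_right[OF powr_kernel_has_integral[of p t \<alpha>]] t \<alpha> by auto
  moreover have "norm (k t \<tau> * f \<tau>) \<le> C * M * (t - \<tau>) powr (-\<alpha>)" if "\<tau> \<in> {p..t}" for \<tau>
  proof -
    have "\<bar>k t \<tau>\<bar> * \<bar>f \<tau>\<bar> \<le> (C * (t - \<tau>) powr (-\<alpha>)) * M"
      using k_bound[of \<tau> t] M[of \<tau>] that t by (intro mult_mono) auto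
    then show ?thesis by (simp add: abs_mult mult_ac)
  qed
  ultimately show ?thesis
    using meas
    by (intro measurable_bounded_by_integrable_imp_absolutely_integrable[where g="\<lambda>\<tau>. C * M * (t - \<tau>) powr (-\<alpha>)"])
       (auto simp: integrable_on_def)
qed

lemma has_integral_rescale_unit_interval:
  fixes g :: "real \<Rightarrow> real"
  assumes "p \<le> t" "g integrable_on {p..t}"
  shows "((\<lambda>s. (t - p) * g (p + s * (t - p))) has_integral integral {p..t} g) {0..1}"
proof (cases "t = p")
  case False
  with assms have tp: "0 < t - p" by simp
  have "((\<lambda>s. g ((t - p) * s + p)) has_integral inverse (t - p) * integral {p..t} g) {0..1}"
    using has_integral_affinity'[OF integrable_integral[OF assms(2)[folded cbox_interval]] tp, of p] tp
    by simp
  then have "((\<lambda>s. g (p + s * (t - p))) has_integral integral {p..t} g / (t - p)) {0..1}"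
    by (simp add: add.commute mult.commute divide_inverse)
  from has_integral_mult_right[OF this, of "t - p"] show ?thesis
    using tp by simp
qed simp

lemma weakly_singular_rescaled_bound:
  fixes k :: "real \<Rightarrow> real \<Rightarrow> real" and f :: "real \<Rightarrow> real"
  assumes C: "0 \<le> C" and M: "\<And>\<tau>. \<tau> \<in> {p..q} \<Longrightarrow> \<bar>f \<tau>\<bar> \<le> M"
    and k_bound: "\<And>t \<tau>. p \<le> \<tau> \<Longrightarrow> \<tau> \<le> t \<Longrightarrow> t \<le> q \<Longrightarrow> \<bar>k t \<tau>\<bar> \<le> C * (t - \<tau>) powr (-\<alpha>)"
    and t: "t \<in> {p..q}" and s: "s \<in> {0..1}"
  shows "\<bar>(t - p) * (k t (p + s * (t - p)) * f (p + s * (t - p)))\<bar>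
           \<le> C * M * (t - p) powr (1 - \<alpha>) * (1 - s) powr (-\<alpha>)"
proof (cases "t = p")
  case True
  have "0 \<le> M" using M[of p] t by auto
  with True C show ?thesis by simp
next
  case False
  with t have tp: "p < t" by auto
  define \<tau> where "\<tau> = p + s * (t - p)"
  have "s * (t - p) \<le> 1 * (t - p)" using s tp by (intro mult_right_mono) auto
  moreover have "0 \<le> s * (t - p)" using s tp by simp
  ultimately have \<tau>: "p \<le> \<tau>" "\<tau> \<le> t" "t - \<tau> = (1 - s) * (t - p)"
    by (auto simp: \<tau>_def algebra_simps)
  have "\<bar>(t - p) * (k t \<tau> * f \<tau>)\<bar> = (t - p) * (\<bar>k t \<tau>\<bar> * \<bar>f \<tau>\<bar>)"
    using tp by (simp add: abs_mult)
  also have "\<dots> \<le> (t - p) * ((C * (t - \<tau>) powr (-\<alpha>)) * M)"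
    using k_bound[of \<tau> t] M[of \<tau>] \<tau> t tp C by (intro mult_left_mono mult_mono) auto
  also have "\<dots> = C * M * ((t - p) * (t - p) powr (-\<alpha>)) * (1 - s) powr (-\<alpha>)"
    by (simp add: \<tau>(3) powr_mult mult_ac)
  also have "(t - p) * (t - p) powr (-\<alpha>) = (t - p) powr (1 - \<alpha>)"
    using tp by (simp add: powr_diff powr_minus divide_inverse)
  finally show ?thesis by (simp add: \<tau>_def)
qed

lemma continuous_on_weakly_singular_rescaled:
  fixes k :: "real \<Rightarrow> real \<Rightarrow> real" and f :: "real \<Rightarrow> real"
  assumes \<alpha>: "\<alpha> < 1" and C: "0 \<le> C" and M: "\<And>\<tau>. \<tau> \<in> {p..q} \<Longrightarrow> \<bar>f \<tau>\<bar> \<le> M"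
    and k_bound: "\<And>t \<tau>. p \<le> \<tau> \<Longrightarrow> \<tau> \<le> t \<Longrightarrow> t \<le> q \<Longrightarrow> \<bar>k t \<tau>\<bar> \<le> C * (t - \<tau>) powr (-\<alpha>)"
    and k_cont: "continuous_on {z. p \<le> snd z \<and> snd z < fst z \<and> fst z \<le> q} (\<lambda>z. k (fst z) (snd z))"
    and f_cont: "continuous_on {p..q} f"
    and pq: "p \<le> q" and s: "s \<in> {0..1}"
  shows "continuous_on {p..q} (\<lambda>t. (t - p) * (k t (p + s * (t - p)) * f (p + s * (t - p))))"
    (is "continuous_on _ ?\<Psi>")
proof (cases "s = 1")
  case True
  have "k t t = 0" if "t \<in> {p..q}" for t
    using k_bound[of t t] that by simp
  then show ?thesis
    using True by (subst continuous_on_cong[where g="\<lambda>t. 0"]) auto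
next
  case False
  with s have s1: "s < 1" "0 \<le> s" by auto
  have inner: "p \<le> p + s * (t - p) \<and> p + s * (t - p) < t" if "p < t" for t
  proof -
    have "s * (t - p) < 1 * (t - p)" using s1 that by (intro mult_strict_right_mono) auto
    moreover have "0 \<le> s * (t - p)" using s1 that by simp
    ultimately show ?thesis by simp
  qed
  have cont_right: "continuous_on {p<..q} ?\<Psi>"
  proof (intro continuous_intros)
    show "continuous_on {p<..q} (\<lambda>t. k t (p + s * (t - p)))"
      using inner
      by (intro continuous_on_compose2[OF k_cont, of _ "\<lambda>t. (t, p + s * (t - p))", simplified])
         (auto intro!: continuous_intros)
    show "continuous_on {p<..q} (\<lambda>t. f (p + s * (t - p)))"
      using inner by (intro continuous_on_compose2[OF f_cont]) (force intro!: continuous_intros)+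
  qed
  have "(?\<Psi> \<longlongrightarrow> 0) (at p within {p..q})"
  proof (rule Lim_null_comparison)
    show "\<forall>\<^sub>F t in at p within {p..q}. norm (?\<Psi> t) \<le> C * M * (1 - s) powr (-\<alpha>) * (t - p) powr (1 - \<alpha>)"
      using weakly_singular_rescaled_bound[where p=p and q=q and f=f and k=k, OF C M k_bound _ s]
      by (auto simp: eventually_at_filter mult_ac)
    have "continuous_on {p..q} (\<lambda>t. C * M * (1 - s) powr (-\<alpha>) * (t - p) powr (1 - \<alpha>))"
      using \<alpha> by (intro continuous_intros continuous_on_powr') auto
    then have "((\<lambda>t. C * M * (1 - s) powr (-\<alpha>) * (t - p) powr (1 - \<alpha>)) \<longlongrightarrow>
              C * M * (1 - s) powr (-\<alpha>) * (p - p) powr (1 - \<alpha>)) (at p within {p..q})"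
      using pq unfolding continuous_on_def by (metis atLeastAtMost_iff order_refl)
    then show "((\<lambda>t. C * M * (1 - s) powr (-\<alpha>) * (t - p) powr (1 - \<alpha>)) \<longlongrightarrow> 0) (at p within {p..q})"
      using \<alpha> by simp
  qed
  then have at_p: "continuous (at p within {p..q}) ?\<Psi>"
    by (simp add: continuous_within)
  have at_right: "continuous (at t within {p..q}) ?\<Psi>" if "t \<in> {p<..q}" for t
  proof -
    have "at t within {p..q} = at t within {p<..q}"
      by (rule at_within_nhd[of _ "{p<..}"]) (use that in auto)
    then show ?thesis
      using cont_right that by (simp add: continuous_on_eq_continuous_within)
  qed
  show ?thesis
    unfolding continuous_on_eq_continuous_within
  proof
    fix t assume "t \<in> {p..q}"
    then consider "t = p" | "t \<in> {p<..q}" by fastforce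
    then show "continuous (at t within {p..q}) ?\<Psi>"
      using at_p at_right by cases auto
  qed
qed

lemma continuous_on_weakly_singular_integral:
  fixes k :: "real \<Rightarrow> real \<Rightarrow> real" and f :: "real \<Rightarrow> real"
  assumes \<alpha>: "0 < \<alpha>" "\<alpha> < 1" and C: "0 \<le> C"
    and k_bound: "\<And>t \<tau>. p \<le> \<tau> \<Longrightarrow> \<tau> \<le> t \<Longrightarrow> t \<le> q \<Longrightarrow> \<bar>k t \<tau>\<bar> \<le> C * (t - \<tau>) powr (-\<alpha>)"
    and k_cont: "continuous_on {z. p \<le> snd z \<and> snd z < fst z \<and> fst z \<le> q} (\<lambda>z. k (fst z) (snd z))"
    and f_cont: "continuous_on {p..q} f"
    and pq: "p \<le> q"
  shows "continuous_on {p..q} (\<lambda>t. integral {p..t} (\<lambda>\<tau>. k t \<tau> * f \<tau>))"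
proof -
  obtain M where M: "\<And>\<tau>. \<tau> \<in> {p..q} \<Longrightarrow> \<bar>f \<tau>\<bar> \<le> M"
    using continuous_on_compact_bound[OF compact_Icc f_cont] by (metis real_norm_def)
  define \<Psi> where "\<Psi> t s = (t - p) * (k t (p + s * (t - p)) * f (p + s * (t - p)))" for t s
  have rescaled: "(\<Psi> t has_integral integral {p..t} (\<lambda>\<tau>. k t \<tau> * f \<tau>)) {0..1}" if "t \<in> {p..q}" for t
    unfolding \<Psi>_def using that
    by (intro has_integral_rescale_unit_interval set_lebesgue_integral_eq_integral(1)
          weakly_singular_absolutely_integrable[OF \<alpha> C k_bound k_cont f_cont]) auto
  define h where "h s = C * M * (q - p) powr (1 - \<alpha>) * (1 - s) powr (-\<alpha>)" for s
  have "(\<lambda>s. (1 - s) powr (-\<alpha>)) integrable_on {0..1}"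
    using powr_kernel_has_integral[of 0 1 \<alpha>] \<alpha> by (auto simp: integrable_on_def)
  then have h_int: "h integrable_on {0..1}"
    unfolding h_def by (rule integrable_on_mult_right)
  have dominated: "norm (\<Psi> t s) \<le> h s" if "t \<in> {p..q}" "s \<in> {0..1}" for t s
  proof -
    have "0 \<le> M" using M[of p] pq by auto
    moreover have "(t - p) powr (1 - \<alpha>) \<le> (q - p) powr (1 - \<alpha>)"
      using that \<alpha> by (intro powr_mono2) auto
    ultimately have "C * M * (t - p) powr (1 - \<alpha>) * (1 - s) powr (-\<alpha>) \<le> h s"
      unfolding h_def using C by (intro mult_right_mono mult_left_mono) auto
    then show ?thesis
      using weakly_singular_rescaled_bound[where p=p and q=q and f=f and k=k, OF C M k_bound that] by (simp add: \<Psi>_def)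
  qed
  have "continuous_on {p..q} (\<lambda>t. integral {0..1} (\<Psi> t))"
    unfolding continuous_on_sequentially
  proof (intro allI ballI impI)
    fix x :: "nat \<Rightarrow> real" and t0
    assume t0: "t0 \<in> {p..q}" and x: "(\<forall>n. x n \<in> {p..q}) \<and> x \<longlonglongrightarrow> t0"
    have "(\<lambda>n. integral {0..1} (\<Psi> (x n))) \<longlonglongrightarrow> integral {0..1} (\<Psi> t0)"
    proof (rule dominated_convergence(2)[OF _ h_int])
      show "\<Psi> (x n) integrable_on {0..1}" for n
        using rescaled x by (auto simp: integrable_on_def)
      show "norm (\<Psi> (x n) s) \<le> h s" if "s \<in> {0..1}" for n s
        using dominated x that by auto
      show "(\<lambda>n. \<Psi> (x n) s) \<longlonglongrightarrow> \<Psi> t0 s" if "s \<in> {0..1}" for s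
        using continuous_on_weakly_singular_rescaled[OF \<alpha>(2) C M k_bound k_cont f_cont pq that] t0 x
        unfolding continuous_on_sequentially \<Psi>_def by (auto simp: o_def)
    qed
    then show "((\<lambda>t. integral {0..1} (\<Psi> t)) \<circ> x) \<longlonglongrightarrow> integral {0..1} (\<Psi> t0)"
      by (simp add: o_def)
  qed
  then show ?thesis
    by (rule continuous_on_eq) (use rescaled in \<open>auto intro: integral_unique\<close>)
qed

definition kat_kernel :: "real \<Rightarrow> real \<Rightarrow> real \<Rightarrow> real \<Rightarrow> real" where
  "kat_kernel \<rho> \<alpha> t \<tau> = (t powr \<rho> - \<tau> powr \<rho>) powr (-\<alpha>)"

lemma powr_diff_ge_linear:
  fixes a b \<rho> t \<tau> :: real
  assumes "0 < a" "0 < \<rho>" "a \<le> \<tau>" "\<tau> \<le> t" "t \<le> b"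
  shows "\<rho> * min (a powr (\<rho> - 1)) (b powr (\<rho> - 1)) * (t - \<tau>) \<le> t powr \<rho> - \<tau> powr \<rho>"
proof (cases "\<tau> = t")
  case False
  with assms have lt: "\<tau> < t" by auto
  have "\<exists>z. \<tau> < z \<and> z < t \<and> (t powr \<rho> - \<tau> powr \<rho> = (t - \<tau>) * (\<rho> * z powr (\<rho> - 1)))"
  proof (rule MVT2[OF lt])
    fix x assume "\<tau> \<le> x" "x \<le> t"
    then have "0 < x" using assms by auto
    then show "((\<lambda>x. x powr \<rho>) has_real_derivative \<rho> * x powr (\<rho> - 1)) (at x)"
      by (auto intro!: derivative_eq_intros)
  qed
  then obtain z where z: "\<tau> < z" "z < t" "t powr \<rho> - \<tau> powr \<rho> = (t - \<tau>) * (\<rho> * z powr (\<rho> - 1))"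
    by blast
  have "min (a powr (\<rho> - 1)) (b powr (\<rho> - 1)) \<le> z powr (\<rho> - 1)"
  proof (cases "0 \<le> \<rho> - 1")
    case True
    then have "a powr (\<rho> - 1) \<le> z powr (\<rho> - 1)" using z assms by (intro powr_mono2) auto
    then show ?thesis by simp
  next
    case False
    then have "b powr (\<rho> - 1) \<le> z powr (\<rho> - 1)" using z assms by (intro powr_mono2') auto
    then show ?thesis by simp
  qed
  then have "\<rho> * min (a powr (\<rho> - 1)) (b powr (\<rho> - 1)) \<le> \<rho> * z powr (\<rho> - 1)"
    using assms by simp
  then show ?thesis using z lt by (simp add: mult_right_mono mult.commute)
qed simp

lemma kat_kernel_bound:
  fixes a b \<rho> \<alpha> :: real
  assumes "0 < a" "a \<le> b" "0 < \<rho>" "0 < \<alpha>"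
  obtains C where "0 \<le> C"
    and "\<And>t \<tau>. a \<le> \<tau> \<Longrightarrow> \<tau> \<le> t \<Longrightarrow> t \<le> b \<Longrightarrow> \<bar>kat_kernel \<rho> \<alpha> t \<tau>\<bar> \<le> C * (t - \<tau>) powr (-\<alpha>)"
proof
  define m where "m = \<rho> * min (a powr (\<rho> - 1)) (b powr (\<rho> - 1))"
  have m: "0 < m" using assms by (simp add: m_def)
  show "0 \<le> m powr (-\<alpha>)" by simp
  fix t \<tau> assume "a \<le> \<tau>" "\<tau> \<le> t" "t \<le> b"
  show "\<bar>kat_kernel \<rho> \<alpha> t \<tau>\<bar> \<le> m powr (-\<alpha>) * (t - \<tau>) powr (-\<alpha>)"
  proof (cases "\<tau> = t")
    case False
    with \<open>\<tau> \<le> t\<close> have "0 < m * (t - \<tau>)" using m by simp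
    moreover have "m * (t - \<tau>) \<le> t powr \<rho> - \<tau> powr \<rho>"
      unfolding m_def using powr_diff_ge_linear assms \<open>a \<le> \<tau>\<close> \<open>\<tau> \<le> t\<close> \<open>t \<le> b\<close> by blast
    ultimately have "(t powr \<rho> - \<tau> powr \<rho>) powr (-\<alpha>) \<le> (m * (t - \<tau>)) powr (-\<alpha>)"
      using assms by (intro powr_mono2') auto
    then show ?thesis by (simp add: kat_kernel_def powr_mult)
  qed (simp add: kat_kernel_def)
qed

lemma continuous_on_kat_kernel:
  fixes a b \<rho> \<alpha> :: real
  assumes "0 < a" "0 < \<rho>"
  shows "continuous_on {z. a \<le> snd z \<and> snd z < fst z \<and> fst z \<le> b} (\<lambda>z. kat_kernel \<rho> \<alpha> (fst z) (snd z))"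
  unfolding kat_kernel_def
proof (intro continuous_intros ballI)
  fix z :: "real \<times> real" assume z: "z \<in> {z. a \<le> snd z \<and> snd z < fst z \<and> fst z \<le> b}"
  then show "fst z \<noteq> 0" "snd z \<noteq> 0" using assms by auto
  have "snd z powr \<rho> < fst z powr \<rho>" using z assms by (intro powr_less_mono2) auto
  then show "fst z powr \<rho> - snd z powr \<rho> \<noteq> 0" by simp
qed

lemma continuous_on_kat_kernel_reflected:
  fixes a c \<rho> \<alpha> :: real
  assumes "0 < a" "0 < \<rho>"
  shows "continuous_on {z. -c \<le> snd z \<and> snd z < fst z \<and> fst z \<le> -a}
           (\<lambda>z. kat_kernel \<rho> \<alpha> (- snd z) (- fst z))"
  unfolding kat_kernel_def
proof (intro continuous_intros ballI)
  fix z :: "real \<times> real" assume z: "z \<in> {z. -c \<le> snd z \<and> snd z < fst z \<and> fst z \<le> -a}"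
  then show "- fst z \<noteq> 0" "- snd z \<noteq> 0" using assms by auto
  have "(- fst z) powr \<rho> < (- snd z) powr \<rho>" using z assms by (intro powr_less_mono2) auto
  then show "(- snd z) powr \<rho> - (- fst z) powr \<rho> \<noteq> 0" by simp
qed

lemma kat_kernel_left_absolutely_integrable:
  fixes f :: "real \<Rightarrow> real"
  assumes "0 < a" "0 < \<rho>" "0 < \<alpha>" "\<alpha> < 1"
    and "continuous_on {a..b} f" and "t \<in> {a..b}"
  shows "(\<lambda>\<tau>. kat_kernel \<rho> \<alpha> t \<tau> * f \<tau>) absolutely_integrable_on {a..t}"
proof -
  obtain C where "0 \<le> C"
    "\<And>t \<tau>. a \<le> \<tau> \<Longrightarrow> \<tau> \<le> t \<Longrightarrow> t \<le> b \<Longrightarrow> \<bar>kat_kernel \<rho> \<alpha> t \<tau>\<bar> \<le> C * (t - \<tau>) powr (-\<alpha>)"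
    using kat_kernel_bound[OF assms(1) _ assms(2,3), of b] assms(6) by auto
  then show ?thesis
    by (rule weakly_singular_absolutely_integrable[OF assms(3,4) _ _ continuous_on_kat_kernel[OF assms(1,2)]
          assms(5,6)])
qed

lemma continuous_on_kat_kernel_left_integral:
  fixes f :: "real \<Rightarrow> real"
  assumes "0 < a" "a \<le> b" "0 < \<rho>" "0 < \<alpha>" "\<alpha> < 1" and "continuous_on {a..b} f"
  shows "continuous_on {a..b} (\<lambda>t. integral {a..t} (\<lambda>\<tau>. kat_kernel \<rho> \<alpha> t \<tau> * f \<tau>))"
proof -
  obtain C where "0 \<le> C"
    "\<And>t \<tau>. a \<le> \<tau> \<Longrightarrow> \<tau> \<le> t \<Longrightarrow> t \<le> b \<Longrightarrow> \<bar>kat_kernel \<rho> \<alpha> t \<tau>\<bar> \<le> C * (t - \<tau>) powr (-\<alpha>)"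
    using kat_kernel_bound assms(1-4) by blast
  then show ?thesis
    by (rule continuous_on_weakly_singular_integral[OF assms(4,5) _ _ continuous_on_kat_kernel[OF assms(1,3)]
          assms(6,2)])
qed

text \<open>The right-sided integrals are reduced to the left-sided ones by the reflection \<open>\<tau> \<mapsto> -\<tau>\<close>.\<close>

lemma kat_kernel_right_absolutely_integrable:
  fixes f :: "real \<Rightarrow> real"
  assumes a: "0 < a" and \<rho>: "0 < \<rho>" and \<alpha>: "0 < \<alpha>" "\<alpha> < 1"
    and f: "continuous_on {a..c} f" and t: "t \<in> {a..c}"
  shows "(\<lambda>\<tau>. kat_kernel \<rho> \<alpha> \<tau> t * f \<tau>) absolutely_integrable_on {t..c}"
proof -
  have ac: "a \<le> c" using t by simp
  obtain C where C: "0 \<le> C"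
    "\<And>t \<tau>. a \<le> \<tau> \<Longrightarrow> \<tau> \<le> t \<Longrightarrow> t \<le> c \<Longrightarrow> \<bar>kat_kernel \<rho> \<alpha> t \<tau>\<bar> \<le> C * (t - \<tau>) powr (-\<alpha>)"
    using kat_kernel_bound a ac \<rho> \<alpha> by blast
  have f_refl: "continuous_on {-c..-a} (\<lambda>\<sigma>. f (- \<sigma>))"
    by (rule continuous_on_compose2[OF f]) (auto intro!: continuous_intros)
  have k_refl: "\<bar>kat_kernel \<rho> \<alpha> (-\<tau>) (-s)\<bar> \<le> C * (s - \<tau>) powr (-\<alpha>)"
    if "-c \<le> \<tau>" "\<tau> \<le> s" "s \<le> -a" for s \<tau>
    using C(2)[of "-s" "-\<tau>"] that by simp
  have "(\<lambda>\<sigma>. kat_kernel \<rho> \<alpha> (-\<sigma>) (- (-t)) * f (- \<sigma>)) absolutely_integrable_on {-c..-t}"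
    by (rule weakly_singular_absolutely_integrable[OF \<alpha> C(1) k_refl continuous_on_kat_kernel_reflected[OF a \<rho>] f_refl])
       (use t in auto)
  then show ?thesis by (subst (asm) absolutely_integrable_reflect_real) simp
qed

lemma continuous_on_kat_int_right:
  fixes f :: "real \<Rightarrow> real"
  assumes a: "0 < a" "a \<le> c" and \<rho>: "0 < \<rho>" and \<alpha>: "0 < \<alpha>" "\<alpha> < 1"
    and f: "continuous_on {a..c} f"
  shows "continuous_on {a..c} (kat_int_right \<alpha> \<rho> c f)"
proof -
  obtain C where C: "0 \<le> C"
    "\<And>t \<tau>. a \<le> \<tau> \<Longrightarrow> \<tau> \<le> t \<Longrightarrow> t \<le> c \<Longrightarrow> \<bar>kat_kernel \<rho> \<alpha> t \<tau>\<bar> \<le> C * (t - \<tau>) powr (-\<alpha>)"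
    using kat_kernel_bound a \<rho> \<alpha> by blast
  have f_refl: "continuous_on {-c..-a} (\<lambda>\<sigma>. f (- \<sigma>))"
    by (rule continuous_on_compose2[OF f]) (auto intro!: continuous_intros)
  have k_refl: "\<bar>kat_kernel \<rho> \<alpha> (-\<tau>) (-s)\<bar> \<le> C * (s - \<tau>) powr (-\<alpha>)"
    if "-c \<le> \<tau>" "\<tau> \<le> s" "s \<le> -a" for s \<tau>
    using C(2)[of "-s" "-\<tau>"] that by simp
  have "continuous_on {-c..-a}
      (\<lambda>s. integral {-c..s} (\<lambda>\<sigma>. kat_kernel \<rho> \<alpha> (-\<sigma>) (-s) * f (- \<sigma>)))"
    by (rule continuous_on_weakly_singular_integral[OF \<alpha> C(1) k_refl
          continuous_on_kat_kernel_reflected[OF a(1) \<rho>] f_refl]) (use a in auto)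
  then have "continuous_on {a..c}
      (\<lambda>t. integral {-c..-t} (\<lambda>\<sigma>. kat_kernel \<rho> \<alpha> (-\<sigma>) (-(-t)) * f (- \<sigma>)))"
    by (rule continuous_on_compose2) (auto intro!: continuous_intros)
  moreover have "integral {-c..-t} (\<lambda>\<sigma>. kat_kernel \<rho> \<alpha> (-\<sigma>) (-(-t)) * f (- \<sigma>))
      = integral {t..c} (\<lambda>\<tau>. kat_kernel \<rho> \<alpha> \<tau> t * f \<tau>)" for t
    using Henstock_Kurzweil_Integration.integral_reflect_real[of c t "\<lambda>\<tau>. kat_kernel \<rho> \<alpha> \<tau> t * f \<tau>"] by simp
  ultimately show ?thesis
    unfolding kat_int_right_def kat_kernel_def[symmetric] by (intro continuous_intros) simp
qed

lemma lborel_set_integral_Icc: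
  fixes h :: "real \<Rightarrow> real"
  assumes hm: "h \<in> borel_measurable borel" and hi: "h absolutely_integrable_on {p..q}"
  shows "set_integrable lborel {p..q} h" "(LINT x:{p..q}|lborel. h x) = integral {p..q} h"
proof -
  have m: "(\<lambda>x. indicator {p..q} x *\<^sub>R h x) \<in> lborel \<rightarrow>\<^sub>M borel"
    using hm by (simp add: measurable_lborel1)
  show si: "set_integrable lborel {p..q} h"
    using hi integrable_completion[OF m] unfolding set_integrable_def by simp
  show "(LINT x:{p..q}|lborel. h x) = integral {p..q} h"
    by (rule set_borel_integral_eq_integral(2)[OF si])
qed

lemma continuous_on_clamp:
  fixes f :: "real \<Rightarrow> real"
  assumes "continuous_on {a..b} f" "a \<le> b"
  shows "continuous_on UNIV (\<lambda>t. f (max a (min b t)))"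
  by (rule continuous_on_compose2[OF assms(1)]) (use assms(2) in \<open>auto intro!: continuous_intros\<close>)

lemma borel_measurable_clamp:
  fixes f :: "real \<Rightarrow> real"
  assumes "continuous_on {a..b} f" "a \<le> b"
  shows "(\<lambda>t. f (max a (min b t))) \<in> borel_measurable borel"
  by (rule borel_measurable_continuous_onI[OF continuous_on_clamp[OF assms]])

text \<open>\<open>\<Lambda>\<close> and \<open>g\<close> are extended to the whole line by clamping, which makes the integrand a Borel
  function on the plane without changing it on the triangle.\<close>

definition triangle_integrand ::
    "real \<Rightarrow> real \<Rightarrow> real \<Rightarrow> real \<Rightarrow> real \<Rightarrow> (real \<Rightarrow> real) \<Rightarrow> (real \<Rightarrow> real) \<Rightarrow> real \<times> real \<Rightarrow> real" where
  "triangle_integrand a A b \<rho> \<alpha> \<Lambda> g z =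
     indicator {z. A \<le> fst z \<and> fst z \<le> b \<and> a \<le> snd z \<and> snd z \<le> fst z} z *
     (\<Lambda> (max a (min b (fst z))) * kat_kernel \<rho> \<alpha> (fst z) (snd z) * g (max a (min b (snd z))))"

lemma borel_measurable_triangle_integrand:
  assumes ab: "a \<le> b" and \<Lambda>: "continuous_on {a..b} \<Lambda>" and g: "continuous_on {a..b} g"
  shows "triangle_integrand a A b \<rho> \<alpha> \<Lambda> g \<in> borel_measurable (lborel \<Otimes>\<^sub>M lborel)"
proof -
  define \<Lambda>e where "\<Lambda>e = (\<lambda>t. \<Lambda> (max a (min b t)))"
  define ge where "ge = (\<lambda>t. g (max a (min b t)))"
  have [measurable]: "\<Lambda>e \<in> borel_measurable borel" "ge \<in> borel_measurable borel"
    unfolding \<Lambda>e_def ge_def by (rule borel_measurable_clamp[OF \<Lambda> ab] borel_measurable_clamp[OF g ab])+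
  have eq: "triangle_integrand a A b \<rho> \<alpha> \<Lambda> g = (\<lambda>z. indicator {z. A \<le> fst z \<and> fst z \<le> b \<and> a \<le> snd z \<and> snd z \<le> fst z} z *
      (\<Lambda>e (fst z) * kat_kernel \<rho> \<alpha> (fst z) (snd z) * ge (snd z)))"
    unfolding triangle_integrand_def \<Lambda>e_def ge_def ..
  show ?thesis
    unfolding eq kat_kernel_def by measurable
qed

lemma triangle_integrand_section_fst:
  assumes a: "0 < a" "a \<le> A" "A \<le> b" and \<rho>: "0 < \<rho>" and \<alpha>: "0 < \<alpha>" "\<alpha> < 1"
    and \<Lambda>: "continuous_on {a..b} \<Lambda>" and g: "continuous_on {a..b} g"
  shows "integrable lborel (\<lambda>\<tau>. triangle_integrand a A b \<rho> \<alpha> \<Lambda> g (t, \<tau>))"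
    and "(\<integral>\<tau>. triangle_integrand a A b \<rho> \<alpha> \<Lambda> g (t, \<tau>) \<partial>lborel)
           = indicator {A..b} t * (\<Lambda> t * integral {a..t} (\<lambda>\<tau>. kat_kernel \<rho> \<alpha> t \<tau> * g \<tau>))"
proof -
  let ?F = "\<lambda>\<tau>. triangle_integrand a A b \<rho> \<alpha> \<Lambda> g (t, \<tau>)"
  have "integrable lborel ?F \<and>
      (\<integral>\<tau>. ?F \<tau> \<partial>lborel) = indicator {A..b} t * (\<Lambda> t * integral {a..t} (\<lambda>\<tau>. kat_kernel \<rho> \<alpha> t \<tau> * g \<tau>))"
  proof (cases "t \<in> {A..b}")
    case True
    define ge where "ge = (\<lambda>\<tau>. g (max a (min b \<tau>)))"
    define h where "h = (\<lambda>\<tau>. kat_kernel \<rho> \<alpha> t \<tau> * ge \<tau>)"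
    have [measurable]: "ge \<in> borel_measurable borel"
      unfolding ge_def using a by (intro borel_measurable_clamp[OF g]) simp
    have hm: "h \<in> borel_measurable borel"
      unfolding h_def kat_kernel_def by measurable
    have "continuous_on {a..b} ge"
      using continuous_on_clamp[OF g] a unfolding ge_def by (auto elim: continuous_on_subset)
    then have hi: "h absolutely_integrable_on {a..t}"
      unfolding h_def by (rule kat_kernel_left_absolutely_integrable[OF a(1) \<rho> \<alpha>]) (use True a in auto)
    note S = lborel_set_integral_Icc[OF hm hi]
    have "?F = (\<lambda>\<tau>. \<Lambda> t * (indicator {a..t} \<tau> *\<^sub>R h \<tau>))"
      using True a by (auto simp: triangle_integrand_def h_def ge_def indicator_def fun_eq_iff)
    moreover have "integral {a..t} h = integral {a..t} (\<lambda>\<tau>. kat_kernel \<rho> \<alpha> t \<tau> * g \<tau>)"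
      using True by (intro integral_cong) (auto simp: h_def ge_def)
    ultimately show ?thesis
      using S True unfolding set_integrable_def set_lebesgue_integral_def by simp
  next
    case False
    then have "?F = (\<lambda>\<tau>. 0)" by (auto simp: triangle_integrand_def indicator_def fun_eq_iff)
    then show ?thesis using False by simp
  qed
  then show "integrable lborel ?F"
    and "(\<integral>\<tau>. ?F \<tau> \<partial>lborel) = indicator {A..b} t * (\<Lambda> t * integral {a..t} (\<lambda>\<tau>. kat_kernel \<rho> \<alpha> t \<tau> * g \<tau>))"
    by auto
qed

lemma triangle_integrand_section_snd:
  assumes a: "0 < a" "a \<le> A" "A \<le> b" and \<rho>: "0 < \<rho>" and \<alpha>: "0 < \<alpha>" "\<alpha> < 1"
    and \<Lambda>: "continuous_on {a..b} \<Lambda>" and g: "continuous_on {a..b} g"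
  shows "(\<integral>t. triangle_integrand a A b \<rho> \<alpha> \<Lambda> g (t, \<tau>) \<partial>lborel)
           = indicator {a..b} \<tau> * (g \<tau> * integral {max A \<tau>..b} (\<lambda>t. kat_kernel \<rho> \<alpha> t \<tau> * \<Lambda> t))"
proof (cases "\<tau> \<in> {a..b}")
  case True
  let ?F = "\<lambda>t. triangle_integrand a A b \<rho> \<alpha> \<Lambda> g (t, \<tau>)"
  define \<Lambda>e where "\<Lambda>e = (\<lambda>t. \<Lambda> (max a (min b t)))"
  define h where "h = (\<lambda>t. kat_kernel \<rho> \<alpha> t \<tau> * \<Lambda>e t)"
  have [measurable]: "\<Lambda>e \<in> borel_measurable borel"
    unfolding \<Lambda>e_def using a by (intro borel_measurable_clamp[OF \<Lambda>]) simp
  have hm: "h \<in> borel_measurable borel"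
    unfolding h_def kat_kernel_def by measurable
  have "continuous_on {a..b} \<Lambda>e"
    using continuous_on_clamp[OF \<Lambda>] a unfolding \<Lambda>e_def by (auto elim: continuous_on_subset)
  then have "h absolutely_integrable_on {\<tau>..b}"
    unfolding h_def by (rule kat_kernel_right_absolutely_integrable[OF a(1) \<rho> \<alpha> _ True])
  then have hi: "h absolutely_integrable_on {max A \<tau>..b}"
    by (rule set_integrable_subset) auto
  note S = lborel_set_integral_Icc[OF hm hi]
  have "?F = (\<lambda>t. g \<tau> * (indicator {max A \<tau>..b} t *\<^sub>R h t))"
    using True a by (auto simp: triangle_integrand_def h_def \<Lambda>e_def indicator_def fun_eq_iff)
  moreover have "integral {max A \<tau>..b} h = integral {max A \<tau>..b} (\<lambda>t. kat_kernel \<rho> \<alpha> t \<tau> * \<Lambda> t)"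
    using True a by (intro integral_cong) (auto simp: h_def \<Lambda>e_def)
  ultimately show ?thesis
    using S True unfolding set_lebesgue_integral_def by simp
next
  case False
  then have "(\<lambda>t. triangle_integrand a A b \<rho> \<alpha> \<Lambda> g (t, \<tau>)) = (\<lambda>t. 0)"
    by (auto simp: triangle_integrand_def indicator_def fun_eq_iff)
  then show ?thesis using False by simp
qed

lemma integrable_triangle_integrand:
  assumes a: "0 < a" "a \<le> A" "A \<le> b" and \<rho>: "0 < \<rho>" and \<alpha>: "0 < \<alpha>" "\<alpha> < 1"
    and \<Lambda>: "continuous_on {a..b} \<Lambda>" and g: "continuous_on {a..b} g"
  shows "integrable (lborel \<Otimes>\<^sub>M lborel) (triangle_integrand a A b \<rho> \<alpha> \<Lambda> g)"
proof (rule lborel_pair.Fubini_integrable)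
  show "triangle_integrand a A b \<rho> \<alpha> \<Lambda> g \<in> borel_measurable (lborel \<Otimes>\<^sub>M lborel)"
    using borel_measurable_triangle_integrand[OF _ \<Lambda> g] a by simp
  show "AE t in lborel. integrable lborel (\<lambda>\<tau>. triangle_integrand a A b \<rho> \<alpha> \<Lambda> g (t, \<tau>))"
    using triangle_integrand_section_fst(1)[OF a \<rho> \<alpha> \<Lambda> g] by simp
  have \<Lambda>': "continuous_on {a..b} (\<lambda>t. \<bar>\<Lambda> t\<bar>)" and g': "continuous_on {a..b} (\<lambda>t. \<bar>g t\<bar>)"
    using \<Lambda> g by (auto intro: continuous_intros)
  have "norm (triangle_integrand a A b \<rho> \<alpha> \<Lambda> g z) = triangle_integrand a A b \<rho> \<alpha> (\<lambda>t. \<bar>\<Lambda> t\<bar>) (\<lambda>t. \<bar>g t\<bar>) z" for z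
    by (simp add: triangle_integrand_def abs_mult kat_kernel_def)
  then have "(\<lambda>t. \<integral>\<tau>. norm (triangle_integrand a A b \<rho> \<alpha> \<Lambda> g (t, \<tau>)) \<partial>lborel)
      = (\<lambda>t. indicator {A..b} t * (\<bar>\<Lambda> t\<bar> * integral {a..t} (\<lambda>\<tau>. kat_kernel \<rho> \<alpha> t \<tau> * \<bar>g \<tau>\<bar>)))"
    using triangle_integrand_section_fst(2)[OF a \<rho> \<alpha> \<Lambda>' g'] by simp
  moreover have "continuous_on {a..b} (\<lambda>t. \<bar>\<Lambda> t\<bar> * integral {a..t} (\<lambda>\<tau>. kat_kernel \<rho> \<alpha> t \<tau> * \<bar>g \<tau>\<bar>))"
    using \<Lambda> continuous_on_kat_kernel_left_integral[OF a(1) _ \<rho> \<alpha> g'] a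
    by (intro continuous_intros) auto
  then have "continuous_on {A..b} (\<lambda>t. \<bar>\<Lambda> t\<bar> * integral {a..t} (\<lambda>\<tau>. kat_kernel \<rho> \<alpha> t \<tau> * \<bar>g \<tau>\<bar>))"
    by (rule continuous_on_subset) (use a in auto)
  then have "set_integrable lborel {A..b}
      (\<lambda>t. \<bar>\<Lambda> t\<bar> * integral {a..t} (\<lambda>\<tau>. kat_kernel \<rho> \<alpha> t \<tau> * \<bar>g \<tau>\<bar>))"
    by (rule borel_integrable_atLeastAtMost')
  ultimately show "integrable lborel (\<lambda>t. \<integral>\<tau>. norm (triangle_integrand a A b \<rho> \<alpha> \<Lambda> g (t, \<tau>)) \<partial>lborel)"
    unfolding set_integrable_def by simp
qed

lemma integral_triangle_swap:
  fixes \<Lambda> g :: "real \<Rightarrow> real"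
  assumes a: "0 < a" "a \<le> A" "A \<le> b" and \<rho>: "0 < \<rho>" and \<alpha>: "0 < \<alpha>" "\<alpha> < 1"
    and \<Lambda>: "continuous_on {a..b} \<Lambda>" and g: "continuous_on {a..b} g"
  shows "integral {A..b} (\<lambda>t. \<Lambda> t * integral {a..t} (\<lambda>\<tau>. kat_kernel \<rho> \<alpha> t \<tau> * g \<tau>))
       = integral {a..b} (\<lambda>\<tau>. g \<tau> * integral {max A \<tau>..b} (\<lambda>t. kat_kernel \<rho> \<alpha> t \<tau> * \<Lambda> t))"
    (is "integral _ ?\<Phi> = integral _ ?\<Psi>")
proof -
  let ?F = "triangle_integrand a A b \<rho> \<alpha> \<Lambda> g"
  have F: "integrable (lborel \<Otimes>\<^sub>M lborel) ?F"
    by (rule integrable_triangle_integrand[OF a \<rho> \<alpha> \<Lambda> g])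
  have "continuous_on {a..b} ?\<Phi>"
    using \<Lambda> continuous_on_kat_kernel_left_integral[OF a(1) _ \<rho> \<alpha> g] a
    by (intro continuous_intros) auto
  then have "continuous_on {A..b} ?\<Phi>"
    by (rule continuous_on_subset) (use a in auto)
  then have \<Phi>: "set_integrable lborel {A..b} ?\<Phi>"
    by (rule borel_integrable_atLeastAtMost')
  have "integrable lborel (\<lambda>\<tau>. \<integral>t. ?F (t, \<tau>) \<partial>lborel)"
    using lborel_pair.integrable_fst'[OF lborel_pair.integrable_product_swap[OF F]] by simp
  then have \<Psi>: "set_integrable lborel {a..b} ?\<Psi>"
    unfolding set_integrable_def triangle_integrand_section_snd[OF a \<rho> \<alpha> \<Lambda> g] by simp
  have "integral {A..b} ?\<Phi> = (\<integral>t. (\<integral>\<tau>. ?F (t, \<tau>) \<partial>lborel) \<partial>lborel)"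
    using set_borel_integral_eq_integral(2)[OF \<Phi>]
    unfolding set_lebesgue_integral_def triangle_integrand_section_fst(2)[OF a \<rho> \<alpha> \<Lambda> g] by simp
  also have "\<dots> = (\<integral>\<tau>. (\<integral>t. ?F (t, \<tau>) \<partial>lborel) \<partial>lborel)"
    using lborel_pair.Fubini_integral[of "\<lambda>t \<tau>. ?F (t, \<tau>)"] F by simp
  also have "\<dots> = integral {a..b} ?\<Psi>"
    using set_borel_integral_eq_integral(2)[OF \<Psi>]
    unfolding set_lebesgue_integral_def triangle_integrand_section_snd[OF a \<rho> \<alpha> \<Lambda> g] by simp
  finally show ?thesis .
qed

lemma caputo_kat_eq_kernel_integral:
  assumes ab: "a < b" and t: "t \<in> {a..b}"
    and d: "\<And>\<tau>. \<tau> \<in> {a..b} \<Longrightarrow> (y has_vector_derivative y' \<tau>) (at \<tau> within {a..b})"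
  shows "caputo_kat a b \<alpha> \<rho> y t = kat_coef \<rho> \<alpha> * integral {a..t} (\<lambda>\<tau>. kat_kernel \<rho> \<alpha> t \<tau> * y' \<tau>)"
  unfolding caputo_kat_def kat_kernel_def
proof (intro arg_cong[where f="\<lambda>z. kat_coef \<rho> \<alpha> * z"] integral_cong)
  fix \<tau> assume "\<tau> \<in> {a..t}"
  then have "\<tau> \<in> {a..b}" using t by auto
  then show "(t powr \<rho> - \<tau> powr \<rho>) powr - \<alpha> * vector_derivative y (at \<tau> within {a..b}) =
         (t powr \<rho> - \<tau> powr \<rho>) powr - \<alpha> * y' \<tau>"
    using vector_derivative_within_closed_interval[OF ab _ d] by simp
qed

lemma continuous_on_caputo_kat:
  assumes ab: "0 < a" "a < b" and \<rho>: "0 < \<rho>" and \<alpha>: "0 < \<alpha>" "\<alpha> < 1"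
    and yc: "continuous_on {a..b} y'"
    and d: "\<And>\<tau>. \<tau> \<in> {a..b} \<Longrightarrow> (y has_vector_derivative y' \<tau>) (at \<tau> within {a..b})"
  shows "continuous_on {a..b} (caputo_kat a b \<alpha> \<rho> y)"
proof -
  have "continuous_on {a..b} (\<lambda>t. kat_coef \<rho> \<alpha> * integral {a..t} (\<lambda>\<tau>. kat_kernel \<rho> \<alpha> t \<tau> * y' \<tau>))"
    using continuous_on_kat_kernel_left_integral[OF ab(1) _ \<rho> \<alpha> yc] ab by (intro continuous_intros) auto
  then show ?thesis
    by (rule continuous_on_eq) (use caputo_kat_eq_kernel_integral[OF ab(2) _ d] in auto)
qed

lemma caputo_kat_add_scaled:
  assumes ab: "0 < a" "a < b" and \<rho>: "0 < \<rho>" and \<alpha>: "0 < \<alpha>" "\<alpha> < 1"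
    and yc: "continuous_on {a..b} y'" and zc: "continuous_on {a..b} z'"
    and dy: "\<And>\<tau>. \<tau> \<in> {a..b} \<Longrightarrow> (y has_vector_derivative y' \<tau>) (at \<tau> within {a..b})"
    and dz: "\<And>\<tau>. \<tau> \<in> {a..b} \<Longrightarrow> (z has_vector_derivative z' \<tau>) (at \<tau> within {a..b})"
    and t: "t \<in> {a..b}"
  shows "caputo_kat a b \<alpha> \<rho> (\<lambda>s. y s + e * z s) t = caputo_kat a b \<alpha> \<rho> y t + e * caputo_kat a b \<alpha> \<rho> z t"
proof -
  have d: "((\<lambda>s. y s + e * z s) has_vector_derivative (y' \<tau> + e * z' \<tau>)) (at \<tau> within {a..b})"
    if "\<tau> \<in> {a..b}" for \<tau>
    using dy[OF that] dz[OF that]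
    by (auto simp: has_real_derivative_iff_has_vector_derivative[symmetric] intro!: derivative_eq_intros)
  have iy: "(\<lambda>\<tau>. kat_kernel \<rho> \<alpha> t \<tau> * y' \<tau>) integrable_on {a..t}"
    using set_lebesgue_integral_eq_integral(1)[OF kat_kernel_left_absolutely_integrable[OF ab(1) \<rho> \<alpha> yc t]] by simp
  have iz: "(\<lambda>\<tau>. kat_kernel \<rho> \<alpha> t \<tau> * z' \<tau>) integrable_on {a..t}"
    using set_lebesgue_integral_eq_integral(1)[OF kat_kernel_left_absolutely_integrable[OF ab(1) \<rho> \<alpha> zc t]] by simp
  have "integral {a..t} (\<lambda>\<tau>. kat_kernel \<rho> \<alpha> t \<tau> * (y' \<tau> + e * z' \<tau>))
      = integral {a..t} (\<lambda>\<tau>. kat_kernel \<rho> \<alpha> t \<tau> * y' \<tau> + e * (kat_kernel \<rho> \<alpha> t \<tau> * z' \<tau>))"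
    by (simp add: algebra_simps)
  also have "\<dots> = integral {a..t} (\<lambda>\<tau>. kat_kernel \<rho> \<alpha> t \<tau> * y' \<tau>) + e * integral {a..t} (\<lambda>\<tau>. kat_kernel \<rho> \<alpha> t \<tau> * z' \<tau>)"
    using iy iz by (simp add: integral_add integrable_on_mult_right)
  finally show ?thesis
    using caputo_kat_eq_kernel_integral[OF ab(2) t d] caputo_kat_eq_kernel_integral[OF ab(2) t dy] caputo_kat_eq_kernel_integral[OF ab(2) t dz]
    by (simp add: algebra_simps)
qed

lemma ck_norm_le:
  assumes "a \<le> b"
    and "\<And>t. t \<in> {a..b} \<Longrightarrow> \<bar>z t\<bar> \<le> B\<^sub>1"
    and "\<And>t. t \<in> {a..b} \<Longrightarrow> \<bar>caputo_kat a b \<alpha> \<rho> z t\<bar> \<le> B\<^sub>2"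
  shows "ck_norm a b \<alpha> \<rho> z \<le> B\<^sub>1 + B\<^sub>2"
  unfolding ck_norm_def using assms by (intro add_mono cSUP_least) auto

lemma caputo_kat_scaled:
  assumes ab: "0 < a" "a < b" and \<rho>: "0 < \<rho>" and \<alpha>: "0 < \<alpha>" "\<alpha> < 1"
    and z': "continuous_on {a..b} z'"
    and z: "\<And>\<tau>. \<tau> \<in> {a..b} \<Longrightarrow> (z has_vector_derivative z' \<tau>) (at \<tau> within {a..b})"
    and t: "t \<in> {a..b}"
  shows "caputo_kat a b \<alpha> \<rho> (\<lambda>s. e * z s) t = e * caputo_kat a b \<alpha> \<rho> z t"
proof -
  have zero: "((\<lambda>_. 0) has_vector_derivative 0) (at \<tau> within {a..b})" for \<tau> :: real
    by simp
  have "caputo_kat a b \<alpha> \<rho> (\<lambda>_. 0) t = 0"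
    using caputo_kat_eq_kernel_integral[OF ab(2) t zero] by simp
  then show ?thesis
    using caputo_kat_add_scaled[OF ab \<rho> \<alpha> continuous_on_const z' zero z t, of e] by simp
qed

lemma ck_norm_scaled_bound:
  assumes ab: "0 < a" "a < b" and \<rho>: "0 < \<rho>" and \<alpha>: "0 < \<alpha>" "\<alpha> < 1"
    and z': "continuous_on {a..b} z'"
    and z: "\<And>\<tau>. \<tau> \<in> {a..b} \<Longrightarrow> (z has_vector_derivative z' \<tau>) (at \<tau> within {a..b})"
  obtains B where "0 \<le> B" "\<And>e. ck_norm a b \<alpha> \<rho> (\<lambda>t. e * z t) \<le> \<bar>e\<bar> * B"
proof -
  have "continuous_on {a..b} z"
    unfolding continuous_on_eq_continuous_within
    using z has_derivative_continuous unfolding has_vector_derivative_def by blast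
  then obtain B\<^sub>1 where B\<^sub>1: "0 \<le> B\<^sub>1" "\<And>t. t \<in> {a..b} \<Longrightarrow> \<bar>z t\<bar> \<le> B\<^sub>1"
    using continuous_on_compact_bound[OF compact_Icc] by (metis real_norm_def)
  obtain B\<^sub>2 where B\<^sub>2: "0 \<le> B\<^sub>2" "\<And>t. t \<in> {a..b} \<Longrightarrow> \<bar>caputo_kat a b \<alpha> \<rho> z t\<bar> \<le> B\<^sub>2"
    using continuous_on_compact_bound[OF compact_Icc continuous_on_caputo_kat[OF ab \<rho> \<alpha> z' z]]
    by (metis real_norm_def)
  show ?thesis
  proof (rule that[of "B\<^sub>1 + B\<^sub>2"])
    fix e
    have "ck_norm a b \<alpha> \<rho> (\<lambda>t. e * z t) \<le> \<bar>e\<bar> * B\<^sub>1 + \<bar>e\<bar> * B\<^sub>2"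
      using ab B\<^sub>1(2) B\<^sub>2(2) caputo_kat_scaled[OF ab \<rho> \<alpha> z' z]
      by (intro ck_norm_le) (auto simp: abs_mult intro!: mult_left_mono)
    then show "ck_norm a b \<alpha> \<rho> (\<lambda>t. e * z t) \<le> \<bar>e\<bar> * (B\<^sub>1 + B\<^sub>2)"
      by (simp add: distrib_left)
  qed (use B\<^sub>1 B\<^sub>2 in simp)
qed

lemma kat_int_right_split:
  fixes \<Lambda> :: "real \<Rightarrow> real"
  assumes a: "0 < a" "A \<le> b" and \<rho>: "0 < \<rho>" and \<alpha>: "0 < \<alpha>" "\<alpha> < 1"
    and \<Lambda>: "continuous_on {a..b} \<Lambda>" and \<tau>: "\<tau> \<in> {a..b}"
  shows "kat_int_right \<alpha> \<rho> b \<Lambda> \<tau> - (if \<tau> \<le> A then kat_int_right \<alpha> \<rho> A \<Lambda> \<tau> else 0)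
           = kat_coef \<rho> \<alpha> * integral {max A \<tau>..b} (\<lambda>t. kat_kernel \<rho> \<alpha> t \<tau> * \<Lambda> t)"
proof (cases "\<tau> \<le> A")
  case True
  have "(\<lambda>t. kat_kernel \<rho> \<alpha> t \<tau> * \<Lambda> t) integrable_on {\<tau>..b}"
    using set_lebesgue_integral_eq_integral(1)[OF kat_kernel_right_absolutely_integrable[OF a(1) \<rho> \<alpha> \<Lambda> \<tau>]] .
  then have "integral {\<tau>..A} (\<lambda>t. kat_kernel \<rho> \<alpha> t \<tau> * \<Lambda> t) + integral {A..b} (\<lambda>t. kat_kernel \<rho> \<alpha> t \<tau> * \<Lambda> t)
      = integral {\<tau>..b} (\<lambda>t. kat_kernel \<rho> \<alpha> t \<tau> * \<Lambda> t)"
    using True a by (intro Henstock_Kurzweil_Integration.integral_combine) auto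
  then have "integral {A..b} (\<lambda>t. kat_kernel \<rho> \<alpha> t \<tau> * \<Lambda> t)
      = integral {\<tau>..b} (\<lambda>t. kat_kernel \<rho> \<alpha> t \<tau> * \<Lambda> t) - integral {\<tau>..A} (\<lambda>t. kat_kernel \<rho> \<alpha> t \<tau> * \<Lambda> t)"
    by simp
  then show ?thesis
    using True unfolding kat_int_right_def kat_kernel_def by (simp add: max_def right_diff_distrib)
qed (simp add: kat_int_right_def kat_kernel_def max_def)

text \<open>The functional only integrates over \<open>[A, b]\<close> while the
  Caputo derivative looks back to \<open>a\<close>, whence the correction term on \<open>[a, A]\<close>.\<close>

lemma integral_caputo_kat_mult:
  fixes \<Lambda> \<eta> \<eta>' :: "real \<Rightarrow> real"
  assumes a: "0 < a" "a < A" "A \<le> b" and \<rho>: "0 < \<rho>" and \<alpha>: "0 < \<alpha>" "\<alpha> < 1"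
    and \<Lambda>: "continuous_on {a..b} \<Lambda>" and \<eta>': "continuous_on {a..b} \<eta>'"
    and \<eta>: "\<And>t. t \<in> {a..b} \<Longrightarrow> (\<eta> has_vector_derivative \<eta>' t) (at t within {a..b})"
  shows "integral {A..b} (\<lambda>t. caputo_kat a b \<alpha> \<rho> \<eta> t * \<Lambda> t)
       = integral {a..b} (\<lambda>\<tau>. \<eta>' \<tau> *
           (kat_int_right \<alpha> \<rho> b \<Lambda> \<tau> - (if \<tau> \<le> A then kat_int_right \<alpha> \<rho> A \<Lambda> \<tau> else 0)))"
proof -
  have ab: "a < b" using a by simp
  have "integral {A..b} (\<lambda>t. caputo_kat a b \<alpha> \<rho> \<eta> t * \<Lambda> t)
      = integral {A..b} (\<lambda>t. kat_coef \<rho> \<alpha> * (\<Lambda> t * integral {a..t} (\<lambda>\<tau>. kat_kernel \<rho> \<alpha> t \<tau> * \<eta>' \<tau>)))"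
    using caputo_kat_eq_kernel_integral[OF ab _ \<eta>] a by (intro integral_cong) auto
  also have "\<dots> = kat_coef \<rho> \<alpha> * integral {a..b} (\<lambda>\<tau>. \<eta>' \<tau> * integral {max A \<tau>..b} (\<lambda>t. kat_kernel \<rho> \<alpha> t \<tau> * \<Lambda> t))"
    using a by (simp add: integral_triangle_swap[OF a(1) _ a(3) \<rho> \<alpha> \<Lambda> \<eta>'])
  also have "\<dots> = integral {a..b} (\<lambda>\<tau>. \<eta>' \<tau> *
           (kat_int_right \<alpha> \<rho> b \<Lambda> \<tau> - (if \<tau> \<le> A then kat_int_right \<alpha> \<rho> A \<Lambda> \<tau> else 0)))"
    by (subst integral_mult_right[symmetric], rule integral_cong)
       (simp add: kat_int_right_split[OF a(1,3) \<rho> \<alpha> \<Lambda>] mult.left_commute)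
  finally show ?thesis .
qed

lemma has_real_derivative_along_line:
  fixes G :: "real \<Rightarrow> real \<Rightarrow> real"
  assumes G1: "\<And>u v. (\<lambda>w. G w v) differentiable (at u)"
    and G2: "\<And>u v. (\<lambda>w. G u w) differentiable (at v)"
    and G1_cont: "continuous_on UNIV (\<lambda>(u, v). deriv (\<lambda>w. G w v) u)"
  shows "((\<lambda>e. G (u + e * p) (v + e * q)) has_real_derivative
           p * deriv (\<lambda>w. G w (v + e * q)) (u + e * p) + q * deriv (\<lambda>w. G (u + e * p) w) (v + e * q)) (at e)"
proof -
  define u0 v0 where "u0 = u + e * p" and "v0 = v + e * q"
  have partials: "((\<lambda>(s, r). G r s) has_derivative
          (\<lambda>(ts, tr). ts * deriv (\<lambda>w. G u0 w) v0 + blinfun_mult_left (deriv (\<lambda>w. G w v0) u0) tr))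
        (at (v0, u0) within UNIV \<times> UNIV)"
  proof (rule has_derivative_partialsI)
    show "((\<lambda>s. G u0 s) has_derivative (\<lambda>ts. ts * deriv (\<lambda>w. G u0 w) v0)) (at v0 within UNIV)"
      using G2[of u0 v0]
      by (simp add: DERIV_deriv_iff_real_differentiable[symmetric] has_field_derivative_def
          mult.commute[of _ "deriv _ _"])
    show "((\<lambda>r. G r s) has_derivative blinfun_apply (blinfun_mult_left (deriv (\<lambda>w. G w s) r)))
            (at r within UNIV)" for s r
      using G1[of s r]
      by (simp add: DERIV_deriv_iff_real_differentiable[symmetric] has_field_derivative_def
          mult.commute[of _ "deriv _ _"])
    have swapped: "continuous_on UNIV (\<lambda>(s, r). deriv (\<lambda>w. G w s) r)"
      using continuous_on_compose2[OF G1_cont continuous_on_swap, of UNIV] by (simp add: case_prod_beta)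
    show "continuous (at (v0, u0) within UNIV \<times> UNIV) (\<lambda>(s, r). blinfun_mult_left (deriv (\<lambda>w. G w s) r))"
      using bounded_linear.continuous_on[OF bounded_linear_blinfun_mult_left swapped]
      unfolding case_prod_beta by (simp add: continuous_on_eq_continuous_at)
  qed auto
  have line: "((\<lambda>e. (v + e * q, u + e * p)) has_derivative (\<lambda>h. (h * q, h * p))) (at e)"
    by (auto intro!: derivative_eq_intros)
  have "((\<lambda>e. G (u + e * p) (v + e * q)) has_derivative
          (\<lambda>h. h * (q * deriv (\<lambda>w. G u0 w) v0 + p * deriv (\<lambda>w. G w v0) u0))) (at e)"
    using has_derivative_compose[OF line partials[unfolded u0_def v0_def, simplified]]
    by (simp add: u0_def v0_def algebra_simps)
  then show ?thesis
    unfolding has_field_derivative_def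
    by (rule has_derivative_eq_rhs) (simp add: fun_eq_iff u0_def v0_def algebra_simps)
qed

lemma has_real_derivative_integral_variation:
  fixes L :: "real \<Rightarrow> real \<Rightarrow> real \<Rightarrow> real" and x z \<eta> \<zeta> :: "real \<Rightarrow> real"
  assumes L_cont: "continuous_on ({p..q} \<times> UNIV) (\<lambda>(t, u, v). L t u v)"
    and L_diff2: "\<And>t u v. t \<in> {p..q} \<Longrightarrow> (\<lambda>w. L t w v) differentiable (at u)"
    and L_diff3: "\<And>t u v. t \<in> {p..q} \<Longrightarrow> (\<lambda>w. L t u w) differentiable (at v)"
    and L2_cont: "continuous_on ({p..q} \<times> UNIV) (\<lambda>(t, u, v). part2 L t u v)"
    and L3_cont: "continuous_on ({p..q} \<times> UNIV) (\<lambda>(t, u, v). part3 L t u v)"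
    and cont: "continuous_on {p..q} x" "continuous_on {p..q} z"
      "continuous_on {p..q} \<eta>" "continuous_on {p..q} \<zeta>"
  shows "((\<lambda>e. integral {p..q} (\<lambda>t. L t (x t + e * \<eta> t) (z t + e * \<zeta> t))) has_real_derivative
           integral {p..q} (\<lambda>t. \<eta> t * part2 L t (x t) (z t) + \<zeta> t * part3 L t (x t) (z t))) (at 0)"
proof -
  define D where "D e t = \<eta> t * part2 L t (x t + e * \<eta> t) (z t + e * \<zeta> t)
                        + \<zeta> t * part3 L t (x t + e * \<eta> t) (z t + e * \<zeta> t)" for e t
  have "((\<lambda>e. integral (cbox p q) (\<lambda>t. L t (x t + e * \<eta> t) (z t + e * \<zeta> t)))
          has_field_derivative integral (cbox p q) (D 0)) (at 0 within UNIV)"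
  proof (rule leibniz_rule_field_derivative)
    fix e t assume "t \<in> cbox p q"
    then have t: "t \<in> {p..q}" by simp
    have pair: "continuous_on UNIV (\<lambda>uv :: real \<times> real. (t, uv))"
      by (intro continuous_intros)
    have "continuous_on UNIV (\<lambda>(u, v). deriv (\<lambda>w. L t w v) u)"
      using continuous_on_compose2[OF L2_cont pair] t by (auto simp: part2_def case_prod_beta image_subset_iff)
    from has_real_derivative_along_line[OF L_diff2[OF t] L_diff3[OF t] this,
        where u="x t" and p="\<eta> t" and v="z t" and q="\<zeta> t" and e=e]
    show "((\<lambda>e. L t (x t + e * \<eta> t) (z t + e * \<zeta> t)) has_field_derivative D e t) (at e within UNIV)"
      by (simp add: D_def part2_def part3_def)
  next
    fix e :: real
    have "continuous_on {p..q} (\<lambda>t. (t, x t + e * \<eta> t, z t + e * \<zeta> t))"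
      using cont by (intro continuous_intros)
    from continuous_on_compose2[OF L_cont this]
    have "continuous_on {p..q} (\<lambda>t. L t (x t + e * \<eta> t) (z t + e * \<zeta> t))"
      by auto
    then show "(\<lambda>t. L t (x t + e * \<eta> t) (z t + e * \<zeta> t)) integrable_on cbox p q"
      by (simp add: integrable_continuous_real)
  next
    have lift: "continuous_on (UNIV \<times> {p..q}) (\<lambda>y. h (snd y))" if "continuous_on {p..q} h" for h :: "real \<Rightarrow> real"
      by (rule continuous_on_compose2[OF that]) (auto intro!: continuous_intros)
    have args: "continuous_on (UNIV \<times> {p..q})
        (\<lambda>y. (snd y, x (snd y) + fst y * \<eta> (snd y), z (snd y) + fst y * \<zeta> (snd y)))"
      using lift[OF cont(1)] lift[OF cont(2)] lift[OF cont(3)] lift[OF cont(4)]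
      by (intro continuous_intros)
    have sub: "(\<lambda>y. (snd y, x (snd y) + fst y * \<eta> (snd y), z (snd y) + fst y * \<zeta> (snd y)))
        ` (UNIV \<times> {p..q}) \<subseteq> {p..q} \<times> UNIV"
      by auto
    have "continuous_on (UNIV \<times> {p..q}) (\<lambda>y. D (fst y) (snd y))"
      unfolding D_def
      using continuous_on_compose2[OF L2_cont args sub] continuous_on_compose2[OF L3_cont args sub]
        lift[OF cont(3)] lift[OF cont(4)]
      by (intro continuous_on_add continuous_on_mult) auto
    then show "continuous_on (UNIV \<times> cbox p q) (\<lambda>(e, t). D e t)"
      by (simp add: case_prod_beta')
  qed auto
  moreover have "D 0 = (\<lambda>t. \<eta> t * part2 L t (x t) (z t) + \<zeta> t * part3 L t (x t) (z t))"
    by (simp add: D_def fun_eq_iff)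
  ultimately show ?thesis by simp
qed

lemma integral_antiderivative_mult:
  fixes f g :: "real \<Rightarrow> real"
  assumes pq: "p \<le> q" and f: "continuous_on {p..q} f" and g: "continuous_on {p..q} g"
    and f0: "integral {p..q} f = 0"
  shows "integral {p..q} (\<lambda>t. integral {p..t} f * g t) = - integral {p..q} (\<lambda>t. f t * integral {p..t} g)"
proof -
  have F: "((\<lambda>t. integral {p..t} f) has_vector_derivative f t) (at t within {p..q})"
    and G: "((\<lambda>t. integral {p..t} g) has_vector_derivative g t) (at t within {p..q})"
    if "t \<in> {p..q}" for t
    using integral_has_vector_derivative[OF f that] integral_has_vector_derivative[OF g that] by auto
  have "((\<lambda>t. f t * integral {p..t} g + integral {p..t} f * g t) has_integral
         integral {p..q} f * integral {p..q} g - integral {p..p} f * integral {p..p} g) {p..q}"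
  proof (rule fundamental_theorem_of_calculus[OF pq])
    fix t assume "t \<in> {p..q}"
    then show "((\<lambda>t. integral {p..t} f * integral {p..t} g) has_vector_derivative
                 f t * integral {p..t} g + integral {p..t} f * g t) (at t within {p..q})"
      using F G
      by (auto simp: has_real_derivative_iff_has_vector_derivative[symmetric] intro!: derivative_eq_intros)
  qed
  then have "integral {p..q} (\<lambda>t. f t * integral {p..t} g + integral {p..t} f * g t) = 0"
    using f0 by (simp add: integral_unique)
  moreover have "continuous_on {p..q} (\<lambda>t. integral {p..t} f)" "continuous_on {p..q} (\<lambda>t. integral {p..t} g)"
    using indefinite_integral_continuous_1[OF integrable_continuous_real[OF f]]
      indefinite_integral_continuous_1[OF integrable_continuous_real[OF g]] by auto
  then have "(\<lambda>t. f t * integral {p..t} g) integrable_on {p..q}"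
    "(\<lambda>t. integral {p..t} f * g t) integrable_on {p..q}"
    using f g by (auto intro!: integrable_continuous_real continuous_on_mult)
  ultimately show ?thesis
    by (simp add: integral_add)
qed

lemma continuous_eq_0_if_weighted_square_integral_0:
  fixes g :: "real \<Rightarrow> real"
  assumes pq: "p < q" and g: "continuous_on {p..q} g"
    and int0: "integral {p..q} (\<lambda>\<tau>. (q - \<tau>) * (g \<tau>)\<^sup>2) = 0"
    and \<tau>: "\<tau> \<in> {p..q}"
  shows "g \<tau> = 0"
proof -
  have H: "continuous_on {p..q} (\<lambda>\<tau>. (q - \<tau>) * (g \<tau>)\<^sup>2)"
    using g by (intro continuous_intros)
  then have "((\<lambda>\<tau>. (q - \<tau>) * (g \<tau>)\<^sup>2) has_integral 0) {p..q}"
    using int0 integrable_integral[OF integrable_continuous_real] by metis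
  then have zero: "(q - \<sigma>) * (g \<sigma>)\<^sup>2 = 0" if "\<sigma> \<in> {p..q}" for \<sigma>
    using has_integral_0_cbox_imp_0[of p q "\<lambda>\<tau>. (q - \<tau>) * (g \<tau>)\<^sup>2" \<sigma>] H that pq by auto
  have sub: "{p..<q} \<subseteq> {\<sigma> \<in> {p..q}. g \<sigma> = 0}"
  proof
    fix \<sigma> assume "\<sigma> \<in> {p..<q}"
    then show "\<sigma> \<in> {\<sigma> \<in> {p..q}. g \<sigma> = 0}" using zero[of \<sigma>] by auto
  qed
  have "closed {\<sigma> \<in> {p..q}. g \<sigma> = 0}"
    by (rule continuous_closed_preimage_constant[OF g]) simp
  from closure_minimal[OF sub this] have "{p..q} \<subseteq> {\<sigma> \<in> {p..q}. g \<sigma> = 0}"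
    using pq by simp
  then show ?thesis using \<tau> by blast
qed

lemma du_bois_reymond:
  fixes Q :: "real \<Rightarrow> real"
  assumes pq: "p < q" and Q: "continuous_on {p..q} Q"
    and orth: "\<And>\<phi>. continuous_on {p..q} \<phi> \<Longrightarrow> integral {p..q} \<phi> = 0
                 \<Longrightarrow> integral {p..q} (\<lambda>t. \<phi> t * Q t) = 0"
    and \<tau>: "\<tau> \<in> {p..q}"
  shows "Q \<tau> = integral {p..q} Q / (q - p)"
proof -
  define \<kappa> where "\<kappa> = integral {p..q} Q / (q - p)"
  have \<phi>: "continuous_on {p..q} (\<lambda>t. Q t - \<kappa>)"
    using Q by (intro continuous_intros)
  have mean: "integral {p..q} (\<lambda>t. Q t - \<kappa>) = 0"
    using integrable_continuous_real[OF Q] pq by (subst integral_diff) (auto simp: \<kappa>_def)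
  have "integral {p..q} (\<lambda>t. (Q t - \<kappa>)\<^sup>2)
      = integral {p..q} (\<lambda>t. (Q t - \<kappa>) * Q t) - \<kappa> * integral {p..q} (\<lambda>t. Q t - \<kappa>)"
    using \<phi> Q
    by (subst integral_mult_right[symmetric], subst integral_diff[symmetric])
       (auto intro!: integrable_continuous_real continuous_intros simp: power2_eq_square algebra_simps)
  also have "\<dots> = 0"
    using orth[OF \<phi> mean] mean by simp
  finally have "((\<lambda>t. (Q t - \<kappa>)\<^sup>2) has_integral 0) {p..q}"
    using integrable_continuous_real[of p q "\<lambda>t. (Q t - \<kappa>)\<^sup>2"] \<phi>
    by (metis continuous_on_power has_integral_integrable_integral)
  then have "(Q \<tau> - \<kappa>)\<^sup>2 = 0"
    using has_integral_0_cbox_imp_0[of p q "\<lambda>t. (Q t - \<kappa>)\<^sup>2" \<tau>] continuous_on_power[OF \<phi>, of 2] \<tau> pq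
    by auto
  then show ?thesis by (simp add: \<kappa>_def)
qed

locale kat_minimizer =
  fixes a b A \<alpha> \<rho> :: real and L :: "real \<Rightarrow> real \<Rightarrow> real \<Rightarrow> real" and x :: "real \<Rightarrow> real"
  assumes a_pos: "0 < a" and A: "a < A" "A < b"
    and alpha: "0 < \<alpha>" "\<alpha> < 1" and rho: "0 < \<rho>"
    and L_cont: "continuous_on ({a..b} \<times> UNIV) (\<lambda>(t, u, v). L t u v)"
    and L_diff2: "\<And>t u v. t \<in> {a..b} \<Longrightarrow> (\<lambda>w. L t w v) differentiable (at u)"
    and L_diff3: "\<And>t u v. t \<in> {a..b} \<Longrightarrow> (\<lambda>w. L t u w) differentiable (at v)"
    and L2_cont: "continuous_on ({a..b} \<times> UNIV) (\<lambda>(t, u, v). part2 L t u v)"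
    and L3_cont: "continuous_on ({a..b} \<times> UNIV) (\<lambda>(t, u, v). part3 L t u v)"
    and x_C1: "C1_on a b x"
    and locmin: "\<exists>\<epsilon>>0. \<forall>y. C1_on a b y \<and> y A = x A \<and> y b = x b \<and>
                    ck_norm a b \<alpha> \<rho> (\<lambda>t. y t - x t) < \<epsilon> \<longrightarrow>
                  integral {A..b} (\<lambda>t. L t (x t) (caputo_kat a b \<alpha> \<rho> x t))
                    \<le> integral {A..b} (\<lambda>t. L t (y t) (caputo_kat a b \<alpha> \<rho> y t))"
    and kat_int_right_differentiable: "\<And>t. t \<in> {a..b} \<Longrightarrow>
       kat_int_right \<alpha> \<rho> b (\<lambda>\<tau>. part3 L \<tau> (x \<tau>) (caputo_kat a b \<alpha> \<rho> x \<tau>))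
         differentiable (at t within {a..b})"
begin

abbreviation \<Lambda> :: "real \<Rightarrow> real" where
  "\<Lambda> \<tau> \<equiv> part3 L \<tau> (x \<tau>) (caputo_kat a b \<alpha> \<rho> x \<tau>)"

abbreviation \<Phi> :: "real \<Rightarrow> real" where
  "\<Phi> \<tau> \<equiv> part2 L \<tau> (x \<tau>) (caputo_kat a b \<alpha> \<rho> x \<tau>)"

text \<open>\<open>R\<close> is the right Katugampola integral over \<open>[\<tau>, b]\<close> of \<open>\<Lambda>\<close> restricted to \<open>[A, b]\<close>.\<close>

abbreviation R :: "real \<Rightarrow> real" where
  "R \<tau> \<equiv> kat_int_right \<alpha> \<rho> b \<Lambda> \<tau> - (if \<tau> \<le> A then kat_int_right \<alpha> \<rho> A \<Lambda> \<tau> else 0)"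

lemma a_less_b: "a < b"
  using A by simp

lemma C1_on_continuous_on:
  assumes "C1_on a b y"
  shows "continuous_on {a..b} y" "continuous_on {a..b} (caputo_kat a b \<alpha> \<rho> y)"
proof -
  obtain y' where y': "continuous_on {a..b} y'"
    and dy: "\<And>t. t \<in> {a..b} \<Longrightarrow> (y has_vector_derivative y' t) (at t within {a..b})"
    using assms unfolding C1_on_def by blast
  show "continuous_on {a..b} y"
    unfolding continuous_on_eq_continuous_within
    using dy has_derivative_continuous unfolding has_vector_derivative_def by blast
  show "continuous_on {a..b} (caputo_kat a b \<alpha> \<rho> y)"
    by (rule continuous_on_caputo_kat[OF a_pos a_less_b rho alpha y' dy])
qed

lemma continuous_on_\<Lambda>_\<Phi>:
  "continuous_on {a..b} \<Lambda>" "continuous_on {a..b} \<Phi>"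
proof -
  have args: "continuous_on {a..b} (\<lambda>t. (t, x t, caputo_kat a b \<alpha> \<rho> x t))"
    using C1_on_continuous_on[OF x_C1] by (intro continuous_intros)
  show "continuous_on {a..b} \<Lambda>" "continuous_on {a..b} \<Phi>"
    using continuous_on_compose2[OF L3_cont args] continuous_on_compose2[OF L2_cont args] by auto
qed

lemma minimal_along_variation:
  assumes \<eta>': "continuous_on {a..b} \<eta>'"
    and \<eta>: "\<And>t. t \<in> {a..b} \<Longrightarrow> (\<eta> has_vector_derivative \<eta>' t) (at t within {a..b})"
    and \<eta>0: "\<eta> A = 0" "\<eta> b = 0"
  obtains \<delta> where "0 < \<delta>"
    and "\<And>e. \<bar>e\<bar> < \<delta> \<Longrightarrow> integral {A..b} (\<lambda>t. L t (x t) (caputo_kat a b \<alpha> \<rho> x t))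
           \<le> integral {A..b} (\<lambda>t. L t (x t + e * \<eta> t) (caputo_kat a b \<alpha> \<rho> x t + e * caputo_kat a b \<alpha> \<rho> \<eta> t))"
proof -
  obtain x' where x': "continuous_on {a..b} x'"
    and dx: "\<And>t. t \<in> {a..b} \<Longrightarrow> (x has_vector_derivative x' t) (at t within {a..b})"
    using x_C1 unfolding C1_on_def by blast
  obtain B where B: "0 \<le> B" "\<And>e. ck_norm a b \<alpha> \<rho> (\<lambda>t. e * \<eta> t) \<le> \<bar>e\<bar> * B"
    using ck_norm_scaled_bound[OF a_pos a_less_b rho alpha \<eta>' \<eta>] by blast
  obtain \<epsilon> where \<epsilon>: "0 < \<epsilon>" and min: "\<And>y. C1_on a b y \<Longrightarrow> y A = x A \<Longrightarrow> y b = x b \<Longrightarrow>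
      ck_norm a b \<alpha> \<rho> (\<lambda>t. y t - x t) < \<epsilon> \<Longrightarrow>
      integral {A..b} (\<lambda>t. L t (x t) (caputo_kat a b \<alpha> \<rho> x t))
        \<le> integral {A..b} (\<lambda>t. L t (y t) (caputo_kat a b \<alpha> \<rho> y t))"
    using locmin by blast
  show ?thesis
  proof (rule that[of "\<epsilon> / (B + 1)"])
    show "0 < \<epsilon> / (B + 1)" using \<epsilon> B by simp
    fix e assume e: "\<bar>e\<bar> < \<epsilon> / (B + 1)"
    define y where "y = (\<lambda>s. x s + e * \<eta> s)"
    have dy: "(y has_vector_derivative x' t + e * \<eta>' t) (at t within {a..b})" if "t \<in> {a..b}" for t
      unfolding y_def using dx[OF that] \<eta>[OF that] by (intro derivative_intros)
    have "C1_on a b y"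
      unfolding C1_on_def using dy x' \<eta>' by (intro exI[of _ "\<lambda>t. x' t + e * \<eta>' t"]) (auto intro!: continuous_intros)
    moreover have "y A = x A" "y b = x b" using \<eta>0 by (simp_all add: y_def)
    moreover have "ck_norm a b \<alpha> \<rho> (\<lambda>t. y t - x t) < \<epsilon>"
    proof -
      have "ck_norm a b \<alpha> \<rho> (\<lambda>t. y t - x t) \<le> \<bar>e\<bar> * B"
        using B(2)[of e] by (simp add: y_def)
      also have "\<dots> \<le> \<bar>e\<bar> * (B + 1)" by (simp add: mult_left_mono)
      also have "\<dots> < \<epsilon>" using e B by (simp add: field_simps)
      finally show ?thesis .
    qed
    ultimately have "integral {A..b} (\<lambda>t. L t (x t) (caputo_kat a b \<alpha> \<rho> x t))
        \<le> integral {A..b} (\<lambda>t. L t (y t) (caputo_kat a b \<alpha> \<rho> y t))"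
      by (rule min)
    also have "\<dots> = integral {A..b} (\<lambda>t. L t (x t + e * \<eta> t)
                      (caputo_kat a b \<alpha> \<rho> x t + e * caputo_kat a b \<alpha> \<rho> \<eta> t))"
      using caputo_kat_add_scaled[OF a_pos a_less_b rho alpha x' \<eta>' dx \<eta>] A
      by (intro integral_cong) (auto simp: y_def)
    finally show "integral {A..b} (\<lambda>t. L t (x t) (caputo_kat a b \<alpha> \<rho> x t))
        \<le> integral {A..b} (\<lambda>t. L t (x t + e * \<eta> t)
             (caputo_kat a b \<alpha> \<rho> x t + e * caputo_kat a b \<alpha> \<rho> \<eta> t))" .
  qed
qed

lemma first_variation:
  assumes \<eta>': "continuous_on {a..b} \<eta>'"
    and \<eta>: "\<And>t. t \<in> {a..b} \<Longrightarrow> (\<eta> has_vector_derivative \<eta>' t) (at t within {a..b})"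
    and \<eta>0: "\<eta> A = 0" "\<eta> b = 0"
  shows "integral {A..b} (\<lambda>t. \<eta> t * \<Phi> t) + integral {a..b} (\<lambda>\<tau>. \<eta>' \<tau> * R \<tau>) = 0"
proof -
  have Ab: "{A..b} \<subseteq> {a..b}" using A by auto
  then have Ab_UNIV: "{A..b} \<times> UNIV \<subseteq> {a..b} \<times> (UNIV :: (real \<times> real) set)" by auto
  have "C1_on a b \<eta>"
    unfolding C1_on_def using \<eta>' \<eta> by blast
  note cont = C1_on_continuous_on[OF x_C1] C1_on_continuous_on[OF this]
    continuous_on_\<Lambda>_\<Phi>
  have "((\<lambda>e. integral {A..b} (\<lambda>t. L t (x t + e * \<eta> t)
            (caputo_kat a b \<alpha> \<rho> x t + e * caputo_kat a b \<alpha> \<rho> \<eta> t))) has_real_derivative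
          integral {A..b} (\<lambda>t. \<eta> t * \<Phi> t + caputo_kat a b \<alpha> \<rho> \<eta> t * \<Lambda> t)) (at 0)"
    using Ab by (intro has_real_derivative_integral_variation L_diff2 L_diff3
        continuous_on_subset[OF L_cont Ab_UNIV] continuous_on_subset[OF L2_cont Ab_UNIV]
        continuous_on_subset[OF L3_cont Ab_UNIV] continuous_on_subset[OF cont(1) Ab]
        continuous_on_subset[OF cont(2) Ab] continuous_on_subset[OF cont(3) Ab]
        continuous_on_subset[OF cont(4) Ab]) auto
  moreover obtain \<delta> where "0 < \<delta>"
    and "\<And>e. \<bar>e\<bar> < \<delta> \<Longrightarrow> integral {A..b} (\<lambda>t. L t (x t) (caputo_kat a b \<alpha> \<rho> x t))
           \<le> integral {A..b} (\<lambda>t. L t (x t + e * \<eta> t) (caputo_kat a b \<alpha> \<rho> x t + e * caputo_kat a b \<alpha> \<rho> \<eta> t))"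
    using minimal_along_variation[OF \<eta>' \<eta> \<eta>0] by blast
  ultimately have "integral {A..b} (\<lambda>t. \<eta> t * \<Phi> t + caputo_kat a b \<alpha> \<rho> \<eta> t * \<Lambda> t) = 0"
    by (intro DERIV_local_min[where x=0 and d=\<delta>]) auto
  moreover have "(\<lambda>t. \<eta> t * \<Phi> t) integrable_on {A..b}"
    "(\<lambda>t. caputo_kat a b \<alpha> \<rho> \<eta> t * \<Lambda> t) integrable_on {A..b}"
    using cont Ab by (auto intro!: integrable_continuous_real continuous_intros elim: continuous_on_subset)
  ultimately show ?thesis
    using integral_caputo_kat_mult[OF a_pos A(1) less_imp_le[OF A(2)] rho alpha cont(5) \<eta>' \<eta>]
    by (simp add: integral_add)
qed

lemma first_variation_antiderivative:
  assumes \<phi>: "continuous_on {a..b} \<phi>" and mean: "integral {A..b} \<phi> = 0"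
  shows "integral {A..b} (\<lambda>t. integral {A..t} \<phi> * \<Phi> t) + integral {a..b} (\<lambda>\<tau>. \<phi> \<tau> * R \<tau>) = 0"
proof -
  define \<eta> where "\<eta> t = integral {a..t} \<phi> - integral {a..A} \<phi>" for t
  have on_right: "\<eta> t = integral {A..t} \<phi>" if "t \<in> {A..b}" for t
  proof -
    have "\<phi> integrable_on {a..t}"
      using \<phi> that by (intro integrable_continuous_real) (auto elim: continuous_on_subset)
    then show ?thesis
      using that A Henstock_Kurzweil_Integration.integral_combine[of a A t \<phi>] by (simp add: \<eta>_def)
  qed
  have "(\<eta> has_vector_derivative \<phi> t) (at t within {a..b})" if "t \<in> {a..b}" for t
    unfolding \<eta>_def using integral_has_vector_derivative[OF \<phi> that] by (auto intro!: derivative_eq_intros)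
  moreover have "\<eta> A = 0" "\<eta> b = 0"
    using on_right[of A] on_right[of b] mean A by auto
  ultimately have "integral {A..b} (\<lambda>t. \<eta> t * \<Phi> t) + integral {a..b} (\<lambda>\<tau>. \<phi> \<tau> * R \<tau>) = 0"
    by (rule first_variation[OF \<phi>])
  moreover have "integral {A..b} (\<lambda>t. \<eta> t * \<Phi> t) = integral {A..b} (\<lambda>t. integral {A..t} \<phi> * \<Phi> t)"
    by (intro integral_cong) (simp add: on_right)
  ultimately show ?thesis by simp
qed

lemma continuous_on_kat_int_right_\<Lambda>:
  "continuous_on {a..b} (kat_int_right \<alpha> \<rho> b \<Lambda>)" "continuous_on {a..A} (kat_int_right \<alpha> \<rho> A \<Lambda>)"
proof -
  have "a \<le> A" "a \<le> b" "{a..A} \<subseteq> {a..b}" using A by auto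
  with continuous_on_\<Lambda>_\<Phi>(1)
  show "continuous_on {a..b} (kat_int_right \<alpha> \<rho> b \<Lambda>)" "continuous_on {a..A} (kat_int_right \<alpha> \<rho> A \<Lambda>)"
    by (metis continuous_on_kat_int_right[OF a_pos _ rho alpha] continuous_on_subset)+
qed

lemma kat_int_right_eq_on_left:
  assumes \<tau>: "\<tau> \<in> {a..A}"
  shows "kat_int_right \<alpha> \<rho> A \<Lambda> \<tau> = kat_int_right \<alpha> \<rho> b \<Lambda> \<tau>"
proof -
  define D where "D \<sigma> = kat_int_right \<alpha> \<rho> b \<Lambda> \<sigma> - kat_int_right \<alpha> \<rho> A \<Lambda> \<sigma>" for \<sigma>
  have "continuous_on {a..A} (kat_int_right \<alpha> \<rho> b \<Lambda>)"
    using continuous_on_kat_int_right_\<Lambda>(1) by (rule continuous_on_subset) (use A in auto)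
  then have D: "continuous_on {a..A} D"
    unfolding D_def using continuous_on_kat_int_right_\<Lambda>(2) by (intro continuous_intros)
  define \<psi> where "\<psi> \<sigma> = (A - min \<sigma> A) * D (min \<sigma> A)" for \<sigma>
  define H where "H \<sigma> = (A - min \<sigma> A) * (D (min \<sigma> A))\<^sup>2" for \<sigma>
  have min_cont: "continuous_on {a..b} (\<lambda>\<sigma>. D (min \<sigma> A))"
    using A by (intro continuous_on_compose2[OF D]) (auto intro!: continuous_intros)
  have \<psi>: "continuous_on {a..b} \<psi>" and H: "continuous_on {a..b} H"
    unfolding \<psi>_def H_def using min_cont by (auto intro!: continuous_intros)
  have right_0: "integral {A..t} \<psi> = 0" "integral {A..t} H = 0" for t
    by (subst integral_cong[where g="\<lambda>_. 0"], simp add: \<psi>_def H_def, simp)+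
  have "integral {A..b} (\<lambda>t. integral {A..t} \<psi> * \<Phi> t) + integral {a..b} (\<lambda>\<sigma>. \<psi> \<sigma> * R \<sigma>) = 0"
    by (rule first_variation_antiderivative[OF \<psi> right_0(1)])
  moreover have "integral {a..b} (\<lambda>\<sigma>. \<psi> \<sigma> * R \<sigma>) = integral {a..b} H"
    by (intro integral_cong) (auto simp: \<psi>_def H_def D_def power2_eq_square)
  moreover have "integral {a..b} H = integral {a..A} H + integral {A..b} H"
    using A H by (intro Henstock_Kurzweil_Integration.integral_combine[symmetric] integrable_continuous_real) auto
  moreover have "integral {a..A} H = integral {a..A} (\<lambda>\<sigma>. (A - \<sigma>) * (D \<sigma>)\<^sup>2)"
    by (intro integral_cong) (simp add: H_def)
  ultimately have "integral {a..A} (\<lambda>\<sigma>. (A - \<sigma>) * (D \<sigma>)\<^sup>2) = 0"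
    using right_0 by simp
  then have "D \<tau> = 0"
    by (rule continuous_eq_0_if_weighted_square_integral_0[OF A(1) D _ \<tau>])
  then show ?thesis by (simp add: D_def)
qed

lemma kat_int_right_\<Lambda>_at_A: "kat_int_right \<alpha> \<rho> b \<Lambda> A = 0"
  using kat_int_right_eq_on_left[of A] A by (simp add: kat_int_right_def)

lemma integral_mult_Euler_Lagrange_residual:
  assumes \<phi>: "continuous_on {A..b} \<phi>" and mean: "integral {A..b} \<phi> = 0"
  shows "integral {A..b} (\<lambda>t. \<phi> t * (kat_int_right \<alpha> \<rho> b \<Lambda> t - integral {A..t} \<Phi>)) = 0"
proof -
  define \<phi>' where "\<phi>' \<tau> = \<phi> (max \<tau> A)" for \<tau>
  have \<phi>': "continuous_on {a..b} \<phi>'"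
    unfolding \<phi>'_def using A by (intro continuous_on_compose2[OF \<phi>]) (auto intro!: continuous_intros)
  have eq_right: "\<phi>' t = \<phi> t" if "t \<in> {A..b}" for t
    using that by (simp add: \<phi>'_def)
  have Ib: "continuous_on {A..b} (kat_int_right \<alpha> \<rho> b \<Lambda>)" and \<Phi>: "continuous_on {A..b} \<Phi>"
    using continuous_on_kat_int_right_\<Lambda>(1) continuous_on_\<Lambda>_\<Phi>(2) A
    by (auto elim: continuous_on_subset)
  have "integral {A..b} \<phi>' = 0"
    using mean eq_right integral_cong[of "{A..b}" \<phi>' \<phi>] by simp
  then have fv: "integral {A..b} (\<lambda>t. integral {A..t} \<phi>' * \<Phi> t) + integral {a..b} (\<lambda>\<tau>. \<phi>' \<tau> * R \<tau>) = 0"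
    by (rule first_variation_antiderivative[OF \<phi>'])
  have "integral {A..t} \<phi>' = integral {A..t} \<phi>" if "t \<in> {A..b}" for t
    using that eq_right by (intro integral_cong) auto
  then have "integral {A..b} (\<lambda>t. integral {A..t} \<phi>' * \<Phi> t) = integral {A..b} (\<lambda>t. integral {A..t} \<phi> * \<Phi> t)"
    by (intro integral_cong) simp
  with fv have "integral {A..b} (\<lambda>t. integral {A..t} \<phi> * \<Phi> t) + integral {a..b} (\<lambda>\<tau>. \<phi>' \<tau> * R \<tau>) = 0"
    by simp
  moreover have "integral {A..b} (\<lambda>t. integral {A..t} \<phi> * \<Phi> t) = - integral {A..b} (\<lambda>t. \<phi> t * integral {A..t} \<Phi>)"
    using A by (intro integral_antiderivative_mult \<phi> \<Phi> mean) simp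
  moreover have "integral {a..b} (\<lambda>\<tau>. \<phi>' \<tau> * R \<tau>) = integral {A..b} (\<lambda>t. \<phi> t * kat_int_right \<alpha> \<rho> b \<Lambda> t)"
  proof -
    have "((\<lambda>\<tau>. \<phi>' \<tau> * R \<tau>) has_integral 0) {a..A}"
      by (rule has_integral_eq[of _ "\<lambda>_. 0"]) (use kat_int_right_eq_on_left in auto)
    moreover have "((\<lambda>\<tau>. \<phi>' \<tau> * R \<tau>) has_integral integral {A..b} (\<lambda>t. \<phi> t * kat_int_right \<alpha> \<rho> b \<Lambda> t)) {A..b}"
    proof (rule has_integral_eq[OF _ integrable_integral[OF integrable_continuous_real]])
      show "continuous_on {A..b} (\<lambda>t. \<phi> t * kat_int_right \<alpha> \<rho> b \<Lambda> t)"
        using \<phi> Ib by (intro continuous_intros)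
      show "\<phi> t * kat_int_right \<alpha> \<rho> b \<Lambda> t = \<phi>' t * R t" if "t \<in> {A..b}" for t
        using that eq_right kat_int_right_\<Lambda>_at_A kat_int_right_eq_on_left[of A] A by (cases "t = A") auto
    qed
    ultimately show ?thesis
      using has_integral_combine[of a A b] A by (intro integral_unique) fastforce
  qed
  moreover have "(\<lambda>t. \<phi> t * kat_int_right \<alpha> \<rho> b \<Lambda> t) integrable_on {A..b}"
    "(\<lambda>t. \<phi> t * integral {A..t} \<Phi>) integrable_on {A..b}"
    using \<phi> Ib indefinite_integral_continuous_1[OF integrable_continuous_real[OF \<Phi>]]
    by (auto intro!: integrable_continuous_real continuous_intros)
  ultimately show ?thesis
    by (simp add: right_diff_distrib integral_diff)
qed

lemma has_vector_derivative_kat_int_right_\<Lambda>: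
  assumes "t \<in> {a..b}"
  shows "(kat_int_right \<alpha> \<rho> b \<Lambda> has_vector_derivative kat_der_right a \<alpha> \<rho> b \<Lambda> t) (at t within {a..b})"
  using kat_int_right_differentiable[OF assms] unfolding kat_der_right_def
  by (simp add: vector_derivative_works)

lemma euler_lagrange_right:
  assumes t: "t \<in> {A..b}"
  shows "\<Phi> t - kat_der_right a \<alpha> \<rho> b \<Lambda> t = 0"
proof -
  define Q where "Q s = kat_int_right \<alpha> \<rho> b \<Lambda> s - integral {A..s} \<Phi>" for s
  have \<Phi>: "continuous_on {A..b} \<Phi>"
    using continuous_on_\<Lambda>_\<Phi>(2) by (rule continuous_on_subset) (use A in auto)
  have "continuous_on {A..b} (kat_int_right \<alpha> \<rho> b \<Lambda>)"
    using continuous_on_kat_int_right_\<Lambda>(1) by (rule continuous_on_subset) (use A in auto)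
  then have Q: "continuous_on {A..b} Q"
    unfolding Q_def using indefinite_integral_continuous_1[OF integrable_continuous_real[OF \<Phi>]]
    by (intro continuous_intros)
  have orth: "integral {A..b} (\<lambda>s. \<phi> s * Q s) = 0"
    if "continuous_on {A..b} \<phi>" "integral {A..b} \<phi> = 0" for \<phi>
    using integral_mult_Euler_Lagrange_residual[OF that] by (simp add: Q_def)
  have "(Q has_vector_derivative 0) (at t within {A..b})"
  proof (rule has_vector_derivative_transform[OF t])
    show "((\<lambda>_. integral {A..b} Q / (b - A)) has_vector_derivative 0) (at t within {A..b})"
      by simp
    show "Q s = integral {A..b} Q / (b - A)" if "s \<in> {A..b}" for s
      by (rule du_bois_reymond[OF A(2) Q orth that])
  qed
  moreover have "(Q has_vector_derivative kat_der_right a \<alpha> \<rho> b \<Lambda> t - \<Phi> t) (at t within {A..b})"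
    unfolding Q_def
  proof (intro has_vector_derivative_diff)
    show "(kat_int_right \<alpha> \<rho> b \<Lambda> has_vector_derivative kat_der_right a \<alpha> \<rho> b \<Lambda> t) (at t within {A..b})"
      by (rule has_vector_derivative_within_subset[OF has_vector_derivative_kat_int_right_\<Lambda>])
         (use t A in auto)
  qed (rule integral_has_vector_derivative[OF \<Phi> t])
  ultimately have "0 = kat_der_right a \<alpha> \<rho> b \<Lambda> t - \<Phi> t"
    by (rule vector_derivative_unique_within_closed_interval[of A b t Q, unfolded cbox_interval, OF A(2) t])
  then show ?thesis by simp
qed

lemma euler_lagrange_left:
  assumes t: "t \<in> {a..A}"
  shows "kat_der_right a \<alpha> \<rho> A \<Lambda> t - kat_der_right a \<alpha> \<rho> b \<Lambda> t = 0"
proof -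
  have "(kat_int_right \<alpha> \<rho> b \<Lambda> has_vector_derivative kat_der_right a \<alpha> \<rho> b \<Lambda> t) (at t within {a..A})"
    by (rule has_vector_derivative_within_subset[OF has_vector_derivative_kat_int_right_\<Lambda>])
       (use t A in auto)
  then have "(kat_int_right \<alpha> \<rho> A \<Lambda> has_vector_derivative kat_der_right a \<alpha> \<rho> b \<Lambda> t) (at t within {a..A})"
    by (rule has_vector_derivative_transform[OF t, rotated]) (simp add: kat_int_right_eq_on_left)
  then show ?thesis
    using vector_derivative_within_closed_interval[OF A(1) t] by (simp add: kat_der_right_def)
qed

end

theorem mainTheorem5:
  fixes a b A \<alpha> \<rho> xA xb :: real
    and L :: "real \<Rightarrow> real \<Rightarrow> real \<Rightarrow> real"
    and x :: "real \<Rightarrow> real"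
  assumes ab: "0 < a" "a < b"
    and alpha: "0 < \<alpha>" "\<alpha> < 1"
    and rho: "0 < \<rho>"
    and A: "a < A" "A < b"
    and L_cont: "continuous_on ({a..b} \<times> UNIV) (\<lambda>(t, u, v). L t u v)"
    and L_diff2: "\<And>t u v. t \<in> {a..b} \<Longrightarrow> (\<lambda>w. L t w v) differentiable (at u)"
    and L_diff3: "\<And>t u v. t \<in> {a..b} \<Longrightarrow> (\<lambda>w. L t u w) differentiable (at v)"
    and L2_cont: "continuous_on ({a..b} \<times> UNIV) (\<lambda>(t, u, v). part2 L t u v)"
    and L3_cont: "continuous_on ({a..b} \<times> UNIV) (\<lambda>(t, u, v). part3 L t u v)"
    and Db_ex: "\<And>y t. C1_on a b y \<Longrightarrow> t \<in> {a..b} \<Longrightarrow>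
       (\<lambda>s. kat_int_right \<alpha> \<rho> b (\<lambda>\<tau>. part3 L \<tau> (y \<tau>) (caputo_kat a b \<alpha> \<rho> y \<tau>)) s)
         differentiable (at t within {a..b})"
    and Db_cont: "\<And>y. C1_on a b y \<Longrightarrow>
       continuous_on {a..b}
         (kat_der_right a \<alpha> \<rho> b (\<lambda>\<tau>. part3 L \<tau> (y \<tau>) (caputo_kat a b \<alpha> \<rho> y \<tau>)))"
    and x_C1: "C1_on a b x"
    and x_bd: "x A = xA" "x b = xb"
    and locmin: "\<exists>\<epsilon>>0. \<forall>y. C1_on a b y \<and> y A = xA \<and> y b = xb \<and>
                    ck_norm a b \<alpha> \<rho> (\<lambda>t. y t - x t) < \<epsilon> \<longrightarrow>
                  integral {A..b} (\<lambda>t. L t (x t) (caputo_kat a b \<alpha> \<rho> x t))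
                    \<le> integral {A..b} (\<lambda>t. L t (y t) (caputo_kat a b \<alpha> \<rho> y t))"
  shows "(\<forall>t\<in>{a..A}.
           kat_der_right a \<alpha> \<rho> A (\<lambda>\<tau>. part3 L \<tau> (x \<tau>) (caputo_kat a b \<alpha> \<rho> x \<tau>)) t
         - kat_der_right a \<alpha> \<rho> b (\<lambda>\<tau>. part3 L \<tau> (x \<tau>) (caputo_kat a b \<alpha> \<rho> x \<tau>)) t = 0) \<and>
         (\<forall>t\<in>{A..b}.
           part2 L t (x t) (caputo_kat a b \<alpha> \<rho> x t)
         - kat_der_right a \<alpha> \<rho> b (\<lambda>\<tau>. part3 L \<tau> (x \<tau>) (caputo_kat a b \<alpha> \<rho> x \<tau>)) t = 0) \<and>
         kat_int_right \<alpha> \<rho> A (\<lambda>\<tau>. part3 L \<tau> (x \<tau>) (caputo_kat a b \<alpha> \<rho> x \<tau>)) a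
         - kat_int_right \<alpha> \<rho> b (\<lambda>\<tau>. part3 L \<tau> (x \<tau>) (caputo_kat a b \<alpha> \<rho> x \<tau>)) a = 0"
proof -
  note locmin' = locmin[folded x_bd]
  interpret kat_minimizer a b A \<alpha> \<rho> L x
    by (rule kat_minimizer.intro)
       (fact ab(1) A alpha rho L_cont L_diff2 L_diff3 L2_cont L3_cont x_C1 locmin' Db_ex[OF x_C1])+
  show ?thesis
    using euler_lagrange_left euler_lagrange_right kat_int_right_eq_on_left[of a] A by simp
qed

end
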